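(* Assume all hypotheses of the following setting: $n,m\in\mathbb{N}$; $X_1,\ldots,X_n,Y_1,\ldots,Y_m$ are GTAI; $\Theta_1,\ldots,\Theta_n,\Delta_1,\ldots,\Delta_m$ are non-negative, non-degenerate at zero, arbitrarily dependent random variables with distributions whose supports are bounded from above, independent of $(X_1,\ldots,X_n,Y_1,\ldots,Y_m)$; for each $i\le n\wedge m$ the pair $(X_i,Y_i)$ is SAI with constant $C_i>0$; $X_i,Y_j$ are independent for $i\neq j$. Assume moreover that $X_i$ has distribution $F_i\in\mathcal{R}_{-\alpha_i}$ and $Y_j$ has distribution $G_j\in\mathcal{R}_{-\alpha'_j}$ with $\alpha_i,\alpha'_j\in[0,\infty)$, for all $i\le n$, $j\le m$. Then, with $X_n(\Theta)=\sum_{i=1}^n\Theta_iX_i$ and $Y_m(\Delta)=\sum_{j=1}^m\Delta_jY_j$, $$\mathbb{P}(X_n(\Theta)>x,\;Y_m(\Delta)>y)\sim\sum_{i=1}^n\sum_{\substack{j=1\\ j\neq i}}^m\mathbb{E}\big[\Theta_i^{\alpha_i}\Delta_j^{\alpha'_j}\big]\overline F_i(x)\overline G_j(y)+\sum_{i=1}^{n\wedge m}C_i\,\mathbb{E}\big[\Theta_i^{\alpha_i}\Delta_i^{\alpha'_i}\big]\overline F_i(x)\overline G_i(y),$$ as $x\wedge y\to\infty$.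
   Context: $\overline V=1-V$ denotes the tail of a distribution $V$. $V\in\mathcal{R}_{-\alpha}$ (regular variation with index $\alpha\ge0$) if $\lim_{x\to\infty}\overline V(tx)/\overline V(x)=t^{-\alpha}$ for all $t>0$. SAI: real random variables $X,Y$ with distributions $F,G$ are SAI with constant $C>0$ if, as $x\wedge y\to\infty$, $\mathbb{P}(X^->x,Y>y)=O(F(-x)\overline G(y))$, $\mathbb{P}(X>x,Y^->y)=O(\overline F(x)G(-y))$ and $\mathbb{P}(X>x,Y>y)\sim C\,\overline F(x)\overline G(y)$, where $z^-=\max\{-z,0\}$. GTAI: real random variables $X_1,\ldots,X_n,Y_1,\ldots,Y_m$ with supports unbounded above are GTAI if $\lim_{x_i\wedge x_k\wedge y_j\to\infty}\mathbb{P}(|X_i|>x_i\mid X_k>x_k,Y_j>y_j)=0$ for all $1\le i\neq k\le n$, $1\le j\le m$, and $\lim_{x_i\wedge y_j\wedge y_k\to\infty}\mathbb{P}(|Y_j|>y_j\mid X_i>x_i,Y_k>y_k)=0$ for all $1\le j\neq k\le m$, $1\le i\le n$. $f\sim g$ as $x\wedge y\to\infty$ means $f(x,y)/g(x,y)\to1$ as $\min\{x,y\}\to\infty$. *)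

theory Defs
  imports "HOL-Probability.Probability" "HOL-Library.Landau_Symbols"
begin

definition tail :: "'a measure \<Rightarrow> ('a \<Rightarrow> real) \<Rightarrow> real \<Rightarrow> real" where
  "tail M X x = measure M {\<omega> \<in> space M. X \<omega> > x}"

definition cdf_of :: "'a measure \<Rightarrow> ('a \<Rightarrow> real) \<Rightarrow> real \<Rightarrow> real" where
  "cdf_of M X x = measure M {\<omega> \<in> space M. X \<omega> \<le> x}"

definition regvar_tail :: "(real \<Rightarrow> real) \<Rightarrow> real \<Rightarrow> bool" where
  "regvar_tail V \<alpha> \<longleftrightarrow> (\<forall>t>0. ((\<lambda>x. V (t * x) / V x) \<longlongrightarrow> t powr (- \<alpha>)) at_top)"

definition neg_part :: "real \<Rightarrow> real" where
  "neg_part z = max (- z) 0"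

definition unbounded_above :: "'a measure \<Rightarrow> ('a \<Rightarrow> real) \<Rightarrow> bool" where
  "unbounded_above M X \<longleftrightarrow> (\<forall>x. measure M {\<omega> \<in> space M. X \<omega> > x} > 0)"

definition SAI :: "'a measure \<Rightarrow> ('a \<Rightarrow> real) \<Rightarrow> ('a \<Rightarrow> real) \<Rightarrow> real \<Rightarrow> bool" where
  "SAI M X Y C \<longleftrightarrow> C > 0 \<and>
     (\<lambda>(x, y). measure M {\<omega> \<in> space M. neg_part (X \<omega>) > x \<and> Y \<omega> > y})
        \<in> O[at_top \<times>\<^sub>F at_top](\<lambda>(x, y). cdf_of M X (- x) * tail M Y y) \<and>
     (\<lambda>(x, y). measure M {\<omega> \<in> space M. X \<omega> > x \<and> neg_part (Y \<omega>) > y})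
        \<in> O[at_top \<times>\<^sub>F at_top](\<lambda>(x, y). tail M X x * cdf_of M Y (- y)) \<and>
     (\<lambda>(x, y). measure M {\<omega> \<in> space M. X \<omega> > x \<and> Y \<omega> > y})
        \<sim>[at_top \<times>\<^sub>F at_top] (\<lambda>(x, y). C * tail M X x * tail M Y y)"

text \<open>GTAI for X_1..X_n, Y_1..Y_m (supports unbounded above); conditional probabilities
  P(A | B) written as P(A \<inter> B) / P(B).\<close>
definition GTAI :: "'a measure \<Rightarrow> nat \<Rightarrow> nat \<Rightarrow> (nat \<Rightarrow> 'a \<Rightarrow> real) \<Rightarrow> (nat \<Rightarrow> 'a \<Rightarrow> real) \<Rightarrow> bool" where
  "GTAI M n m X Y \<longleftrightarrow>
     (\<forall>i\<in>{1..n}. unbounded_above M (X i)) \<and> (\<forall>j\<in>{1..m}. unbounded_above M (Y j)) \<and>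
     (\<forall>i\<in>{1..n}. \<forall>k\<in>{1..n}. \<forall>j\<in>{1..m}. i \<noteq> k \<longrightarrow>
        ((\<lambda>(a, b, c). measure M {\<omega> \<in> space M. \<bar>X i \<omega>\<bar> > a \<and> X k \<omega> > b \<and> Y j \<omega> > c}
                    / measure M {\<omega> \<in> space M. X k \<omega> > b \<and> Y j \<omega> > c})
          \<longlongrightarrow> 0) (at_top \<times>\<^sub>F at_top \<times>\<^sub>F at_top)) \<and>
     (\<forall>j\<in>{1..m}. \<forall>k\<in>{1..m}. \<forall>i\<in>{1..n}. j \<noteq> k \<longrightarrow>
        ((\<lambda>(a, b, c). measure M {\<omega> \<in> space M. \<bar>Y j \<omega>\<bar> > a \<and> X i \<omega> > b \<and> Y k \<omega> > c}
                    / measure M {\<omega> \<in> space M. X i \<omega> > b \<and> Y k \<omega> > c})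
          \<longlongrightarrow> 0) (at_top \<times>\<^sub>F at_top \<times>\<^sub>F at_top))"

definition idx :: "nat \<Rightarrow> nat \<Rightarrow> (nat + nat) set" where
  "idx n m = Inl ` {1..n} \<union> Inr ` {1..m}"

definition joint_vec :: "nat \<Rightarrow> nat \<Rightarrow> (nat \<Rightarrow> 'a \<Rightarrow> real) \<Rightarrow> (nat \<Rightarrow> 'a \<Rightarrow> real)
    \<Rightarrow> 'a \<Rightarrow> (nat + nat \<Rightarrow> real)" where
  "joint_vec n m A B \<omega> = (\<lambda>k\<in>idx n m. case k of Inl i \<Rightarrow> A i \<omega> | Inr j \<Rightarrow> B j \<omega>)"

end

theory Submission
  imports Defs
begin

text \<open>
  Fix \<open>\<epsilon> > 0\<close>. If both weighted sums exceed \<open>x\<close> and \<open>y\<close>, some summands \<open>\<Theta>\<^sub>i X\<^sub>i\<close> and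
  \<open>\<Delta>\<^sub>j Y\<^sub>j\<close> exceed \<open>(1 - \<epsilon>) x\<close> and \<open>(1 - \<epsilon>) y\<close>, unless a further summand is of order
  \<open>\<epsilon> x\<close> or \<open>\<epsilon> y\<close>; conversely, the events where only \<open>\<Theta>\<^sub>i X\<^sub>i > (1 + \<epsilon>) x\<close> and
  \<open>\<Delta>\<^sub>j Y\<^sub>j > (1 + \<epsilon>) y\<close> are large are disjoint and imply the joint exceedance. By GTAI, the
  events with a further large summand are negligible against \<open>F\<^sub>i(x) G\<^sub>j(y)\<close>. A bivariate
  Breiman lemma (dominated convergence over the bounded joint law of \<open>(\<Theta>\<^sub>i, \<Delta>\<^sub>j)\<close>, fed by SAI
  for \<open>i = j\<close>, independence for \<open>i \<noteq> j\<close>, and regular variation) gives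
  \<open>P(\<Theta>\<^sub>i X\<^sub>i > x, \<Delta>\<^sub>j Y\<^sub>j > y) \<sim> c\<^sub>i\<^sub>j E[\<Theta>\<^sub>i^\<alpha>\<^sub>i \<Delta>\<^sub>j^\<alpha>'\<^sub>j] F\<^sub>i(x) G\<^sub>j(y)\<close>, with \<open>c\<^sub>i\<^sub>i = C\<^sub>i\<close>
  and \<open>c\<^sub>i\<^sub>j = 1\<close> otherwise. Regular variation turns the factors \<open>1 \<plusminus> \<epsilon>\<close> into factors within
  \<open>(1 \<plusminus> \<epsilon>)^-A\<close>, \<open>A\<close> the sum of all indices, and \<open>\<epsilon> \<rightarrow> 0\<close> concludes.
\<close>

section \<open>Limits along the product filter\<close>

lemma tendsto_at_top_prod_sequentially:
  fixes f :: "real \<times> real \<Rightarrow> 'b::metric_space"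
  assumes seq: "\<And>s t. filterlim s at_top sequentially \<Longrightarrow> filterlim t at_top sequentially \<Longrightarrow>
                 (\<lambda>i. f (s i, t i)) \<longlonglongrightarrow> L"
  shows "(f \<longlongrightarrow> L) (at_top \<times>\<^sub>F at_top)"
proof (rule tendstoI, rule ccontr)
  fix e :: real assume "e > 0" and not_ev: "\<not> (\<forall>\<^sub>F z in at_top \<times>\<^sub>F at_top. dist (f z) L < e)"
  have "\<exists>p. fst p \<ge> real N \<and> snd p \<ge> real N \<and> \<not> dist (f p) L < e" for N :: nat
  proof (rule ccontr)
    assume "\<nexists>p. fst p \<ge> real N \<and> snd p \<ge> real N \<and> \<not> dist (f p) L < e"
    hence "\<forall>\<^sub>F z in at_top \<times>\<^sub>F at_top. dist (f z) L < e"
      unfolding eventually_prod_same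
      by (intro exI[of _ "\<lambda>x. x \<ge> real N"]) (auto simp: eventually_ge_at_top)
    with not_ev show False by simp
  qed
  then obtain p where p: "\<And>N. fst (p N) \<ge> real N \<and> snd (p N) \<ge> real N \<and> \<not> dist (f (p N)) L < e"
    by metis
  have "filterlim (\<lambda>N. fst (p N)) at_top sequentially" "filterlim (\<lambda>N. snd (p N)) at_top sequentially"
    by (rule filterlim_at_top_mono[OF filterlim_real_sequentially], use p in auto)+
  from seq[OF this] have "eventually (\<lambda>N. dist (f (p N)) L < e) sequentially"
    using \<open>e > 0\<close> by (auto dest: tendstoD)
  with p show False by (auto simp: eventually_sequentially)
qed

lemma filterlim_scale_at_top_prod:
  fixes b c :: real
  assumes "b > 0" "c > 0"
  shows "filterlim (\<lambda>w. (b * fst w, c * snd w)) (at_top \<times>\<^sub>F at_top) (at_top \<times>\<^sub>F at_top)"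
  by (intro filterlim_Pair filterlim_tendsto_pos_mult_at_top[OF tendsto_const] assms
      filterlim_fst filterlim_snd)

lemma eventually_at_top_prod_pos:
  "\<forall>\<^sub>F w in at_top \<times>\<^sub>F at_top. (0::real) < fst w \<and> (0::real) < snd w"
  unfolding eventually_prod_same using eventually_gt_at_top[of "0::real"] by fastforce

lemma regvar_tail_ratio_rescale:
  fixes H :: "real \<times> real \<Rightarrow> real" and F G :: "real \<Rightarrow> real"
  assumes lim: "((\<lambda>w. H w / (F (fst w) * G (snd w))) \<longlongrightarrow> L) (at_top \<times>\<^sub>F at_top)"
    and F: "regvar_tail F a" and G: "regvar_tail G a'" and b: "b > 0" and c: "c > 0"
    and nonzero: "\<And>x. F x \<noteq> 0" "\<And>y. G y \<noteq> 0"
  shows "((\<lambda>w. H (b * fst w, c * snd w) / (F (fst w) * G (snd w)))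
           \<longlongrightarrow> L * b powr - a * c powr - a') (at_top \<times>\<^sub>F at_top)"
proof -
  have "((\<lambda>w. H (b * fst w, c * snd w) / (F (b * fst w) * G (c * snd w))
           * (F (b * fst w) / F (fst w)) * (G (c * snd w) / G (snd w)))
         \<longlongrightarrow> L * b powr - a * c powr - a') (at_top \<times>\<^sub>F at_top)"
  proof (intro tendsto_mult)
    show "((\<lambda>w. H (b * fst w, c * snd w) / (F (b * fst w) * G (c * snd w))) \<longlongrightarrow> L) (at_top \<times>\<^sub>F at_top)"
      using filterlim_compose[OF lim filterlim_scale_at_top_prod[OF b c]] by simp
    show "((\<lambda>w. F (b * fst w) / F (fst w)) \<longlongrightarrow> b powr - a) (at_top \<times>\<^sub>F at_top)"
      using F b unfolding regvar_tail_def
      by (auto intro: filterlim_compose[OF _ filterlim_fst])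
    show "((\<lambda>w. G (c * snd w) / G (snd w)) \<longlongrightarrow> c powr - a') (at_top \<times>\<^sub>F at_top)"
      using G c unfolding regvar_tail_def
      by (auto intro: filterlim_compose[OF _ filterlim_snd])
  qed
  then show ?thesis by (simp add: nonzero)
qed

lemma tendsto_zero_by_dominating_ratio:
  fixes E H J D :: "'b \<Rightarrow> real"
  assumes "\<And>w. 0 \<le> E w" "eventually (\<lambda>w. E w \<le> H w) F" "\<And>w. 0 \<le> H w" "\<And>w. H w \<le> J w"
    and "((\<lambda>w. H w / J w) \<longlongrightarrow> 0) F" "((\<lambda>w. J w / D w) \<longlongrightarrow> L) F" "\<And>w. D w > 0"
  shows "((\<lambda>w. E w / D w) \<longlongrightarrow> 0) F"
proof (rule tendsto_sandwich[OF _ _ tendsto_const])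
  have eq: "H w / D w = (H w / J w) * (J w / D w)" for w
    using assms(3,4,7)[of w] by (cases "J w = 0") auto
  show "((\<lambda>w. H w / D w) \<longlongrightarrow> 0) F"
    using tendsto_mult[OF assms(5,6)] by (simp only: eq mult_zero_left)
  show "\<forall>\<^sub>F w in F. 0 \<le> E w / D w" using assms(1,7) by (simp add: less_imp_le)
  show "\<forall>\<^sub>F w in F. E w / D w \<le> H w / D w"
    using assms(2) by eventually_elim (use assms(7) in \<open>simp add: divide_right_mono less_imp_le\<close>)
qed

lemma integral_dominated_convergence_at_top_prod:
  fixes s :: "real \<times> real \<Rightarrow> 'a \<Rightarrow> real"
  assumes "f \<in> borel_measurable M" "\<And>w. s w \<in> borel_measurable M" "integrable M g"
    and lim: "AE x in M. ((\<lambda>w. s w x) \<longlongrightarrow> f x) (at_top \<times>\<^sub>F at_top)"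
    and bound: "\<forall>\<^sub>F w in at_top \<times>\<^sub>F at_top. AE x in M. norm (s w x) \<le> g x"
  shows "((\<lambda>w. integral\<^sup>L M (s w)) \<longlongrightarrow> integral\<^sup>L M f) (at_top \<times>\<^sub>F at_top)"
proof (rule tendsto_at_top_prod_sequentially)
  fix X Y :: "nat \<Rightarrow> real"
  assume "filterlim X at_top sequentially" "filterlim Y at_top sequentially"
  then have XY: "filterlim (\<lambda>i. (X i, Y i)) (at_top \<times>\<^sub>F at_top) sequentially"
    by (rule filterlim_Pair)
  from filterlim_iff[THEN iffD1, OF this, rule_format, OF bound]
  obtain N where N: "\<And>i. N \<le> i \<Longrightarrow> AE x in M. norm (s (X i, Y i) x) \<le> g x"
    by (auto simp: eventually_sequentially)
  show "(\<lambda>i. integral\<^sup>L M (s (X i, Y i))) \<longlonglongrightarrow> integral\<^sup>L M f"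
  proof (rule LIMSEQ_offset, rule integral_dominated_convergence)
    show "AE x in M. norm (s (X (i + N), Y (i + N)) x) \<le> g x" for i
      by (rule N) simp
    show "AE x in M. (\<lambda>i. s (X (i + N), Y (i + N)) x) \<longlonglongrightarrow> f x"
      using lim by eventually_elim
        (rule LIMSEQ_ignore_initial_segment, rule filterlim_compose[OF _ XY])
  qed (use assms in auto)
qed

lemma asymp_equiv_sandwich:
  fixes D R :: "'b \<Rightarrow> real" and A :: real
  assumes R: "\<And>w. 0 \<le> R w"
    and upper: "\<And>e. 0 < e \<Longrightarrow> e < 1 \<Longrightarrow> \<exists>up. up \<in> o[F](R) \<and> (\<forall>\<^sub>F w in F. D w \<le> (1 - e) powr - A * R w + up w)"
    and lower: "\<And>e. 0 < e \<Longrightarrow> e < 1 \<Longrightarrow> \<exists>lo. lo \<in> o[F](R) \<and> (\<forall>\<^sub>F w in F. (1 + e) powr - A * R w + lo w \<le> D w)"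
  shows "D \<sim>[F] R"
proof (rule smallo_imp_asymp_equiv, rule landau_o.smallI)
  fix c :: real assume "c > 0"
  have "((\<lambda>t. (1 - t) powr - A) \<longlongrightarrow> 1) (at_right 0)" "((\<lambda>t. (1 + t) powr - A) \<longlongrightarrow> 1) (at_right 0)"
    by (auto intro!: tendsto_eq_intros)
  then have "\<forall>\<^sub>F t in at_right 0. (1 - t) powr - A < 1 + c / 2 \<and> 1 - c / 2 < (1 + t) powr - A"
    using \<open>c > 0\<close> by (intro eventually_conj order_tendstoD) auto
  then obtain b where "b > 0" and b: "\<And>t. 0 < t \<Longrightarrow> t < b \<Longrightarrow> (1 - t) powr - A < 1 + c / 2 \<and> 1 - c / 2 < (1 + t) powr - A"
    unfolding eventually_at_right_field by auto
  define e where "e = min (b / 2) (1 / 2)"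
  have e: "0 < e" "e < 1" "e < b" using \<open>b > 0\<close> by (auto simp: e_def)
  obtain up lo where up: "up \<in> o[F](R)" "\<forall>\<^sub>F w in F. D w \<le> (1 - e) powr - A * R w + up w"
    and lo: "lo \<in> o[F](R)" "\<forall>\<^sub>F w in F. (1 + e) powr - A * R w + lo w \<le> D w"
    using upper[OF e(1,2)] lower[OF e(1,2)] by blast
  have "c / 2 > 0" using \<open>c > 0\<close> by simp
  show "\<forall>\<^sub>F w in F. norm (D w - R w) \<le> c * norm (R w)"
    using up(2) lo(2) landau_o.smallD[OF up(1) \<open>c / 2 > 0\<close>] landau_o.smallD[OF lo(1) \<open>c / 2 > 0\<close>]
  proof eventually_elim
    case (elim w)
    have "(1 - e) powr - A * R w \<le> (1 + c / 2) * R w" "(1 - c / 2) * R w \<le> (1 + e) powr - A * R w"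
      using b[OF e(1,3)] R[of w] by (auto intro!: mult_right_mono)
    then have "(1 - e) powr - A * R w \<le> R w + c * R w / 2" "R w - c * R w / 2 \<le> (1 + e) powr - A * R w"
      by (simp_all add: algebra_simps)
    moreover have "up w \<le> c * R w / 2" "- (c * R w / 2) \<le> lo w"
      using elim R[of w] by (auto simp: abs_le_iff)
    ultimately show ?case
      using elim R[of w] unfolding real_norm_def abs_of_nonneg[OF R[of w]] abs_le_iff by linarith
  qed
qed

lemma exists_gt_average:
  fixes f :: "'i \<Rightarrow> real"
  assumes "finite I" "I \<noteq> {}" "(\<Sum>i\<in>I. f i) > x"
  shows "\<exists>i\<in>I. f i > x / real (card I)"
  using sum_bounded_above_divide[of I f x] assms by force

lemma sum_remove_le:
  fixes f :: "nat \<Rightarrow> real"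
  assumes "k \<in> {1..n}" "e \<ge> 0" "x > 0" "\<And>i. i \<in> {1..n} - {k} \<Longrightarrow> f i \<le> e / real n * x"
  shows "(\<Sum>i\<in>{1..n} - {k}. f i) \<le> e * x"
proof -
  have "(\<Sum>i\<in>{1..n} - {k}. f i) \<le> real (card ({1..n} - {k})) * (e / real n * x)"
    by (rule sum_bounded_above) (use assms in auto)
  also have "\<dots> \<le> real n * (e / real n * x)"
    using assms by (intro mult_right_mono) auto
  also have "\<dots> = e * x" using assms(1) by simp
  finally show ?thesis .
qed

lemma sum_remove_ge:
  fixes f :: "nat \<Rightarrow> real"
  assumes "k \<in> {1..n}" "e \<ge> 0" "x > 0" "\<And>i. i \<in> {1..n} - {k} \<Longrightarrow> \<bar>f i\<bar> \<le> e / real n * x"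
  shows "(\<Sum>i\<in>{1..n} - {k}. f i) \<ge> - (e * x)"
  using sum_remove_le[of k n e x "\<lambda>i. - f i"] assms by (force simp: sum_negf)

lemma less_div_of_mult_less:
  fixes t B u v :: real
  assumes "0 \<le> t" "t \<le> B" "0 < B" "0 \<le> v" "t * u > v"
  shows "u > v / B"
proof -
  have "u > 0"
    using assms mult_nonneg_nonpos[of t u] by (cases "u > 0") auto
  hence "B * u > v" using assms mult_right_mono[of t B u] by linarith
  thus ?thesis using assms(3) by (simp add: pos_divide_less_eq mult.commute)
qed

lemma (in finite_measure) measure_UN_UN_le:
  assumes "finite I" "\<And>i. i \<in> I \<Longrightarrow> finite (J i)" "\<And>i j. i \<in> I \<Longrightarrow> j \<in> J i \<Longrightarrow> A i j \<in> sets M"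
  shows "measure M (\<Union>i\<in>I. \<Union>j\<in>J i. A i j) \<le> (\<Sum>i\<in>I. \<Sum>j\<in>J i. measure M (A i j))"
proof -
  have "measure M (\<Union>i\<in>I. \<Union>j\<in>J i. A i j) \<le> (\<Sum>i\<in>I. measure M (\<Union>j\<in>J i. A i j))"
    using assms by (intro measure_UNION_le) auto
  also have "\<dots> \<le> (\<Sum>i\<in>I. \<Sum>j\<in>J i. measure M (A i j))"
    using assms by (intro sum_mono measure_UNION_le) auto
  finally show ?thesis .
qed

lemma tail_nonneg [simp]: "tail M Z x \<ge> 0"
  by (simp add: tail_def)

section \<open>A bivariate Breiman lemma\<close>

context prob_space
begin

lemma measurable_prob_scaled_pair[measurable]:
  fixes V1 V2 :: "'a \<Rightarrow> real"
  assumes [measurable]: "V1 \<in> borel_measurable M" "V2 \<in> borel_measurable M"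
  shows "(\<lambda>z. \<P>(\<omega> in M. fst z * V1 \<omega> > x \<and> snd z * V2 \<omega> > y)) \<in> borel_measurable (borel \<Otimes>\<^sub>M borel)"
proof -
  let ?Q = "{q \<in> space ((borel \<Otimes>\<^sub>M borel) \<Otimes>\<^sub>M M). fst (fst q) * V1 (snd q) > x \<and> snd (fst q) * V2 (snd q) > y}"
  have "?Q \<in> sets ((borel \<Otimes>\<^sub>M borel) \<Otimes>\<^sub>M M)" by measurable
  then have "(\<lambda>z. enn2real (emeasure M (Pair z -` ?Q))) \<in> borel_measurable (borel \<Otimes>\<^sub>M borel)"
    by (intro borel_measurable_enn2real measurable_emeasure_Pair)
  moreover have "Pair z -` ?Q = {\<omega> \<in> space M. fst z * V1 \<omega> > x \<and> snd z * V2 \<omega> > y}" for z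
    by (auto simp: space_pair_measure)
  ultimately show ?thesis by (simp add: measure_def)
qed

lemma prob_products_eq_integral:
  fixes U1 U2 V1 V2 :: "'a \<Rightarrow> real"
  assumes [measurable]: "V1 \<in> borel_measurable M" "V2 \<in> borel_measurable M"
    and indep: "indep_var (borel \<Otimes>\<^sub>M borel) (\<lambda>\<omega>. (U1 \<omega>, U2 \<omega>)) (borel \<Otimes>\<^sub>M borel) (\<lambda>\<omega>. (V1 \<omega>, V2 \<omega>))"
  shows "\<P>(\<omega> in M. U1 \<omega> * V1 \<omega> > x \<and> U2 \<omega> * V2 \<omega> > y)
       = (\<integral>z. \<P>(\<omega> in M. fst z * V1 \<omega> > x \<and> snd z * V2 \<omega> > y) \<partial>distr M (borel \<Otimes>\<^sub>M borel) (\<lambda>\<omega>. (U1 \<omega>, U2 \<omega>)))"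
    (is "_ = (\<integral>z. ?g z \<partial>?\<mu>)")
proof -
  let ?N = "borel \<Otimes>\<^sub>M borel :: (real \<times> real) measure"
  let ?\<nu> = "distr M ?N (\<lambda>\<omega>. (V1 \<omega>, V2 \<omega>))"
  let ?Q = "{q \<in> space (?N \<Otimes>\<^sub>M ?N). fst (fst q) * fst (snd q) > x \<and> snd (fst q) * snd (snd q) > y}"
  interpret \<nu>: prob_space ?\<nu> by (rule prob_space_distr) simp
  have U[measurable]: "(\<lambda>\<omega>. (U1 \<omega>, U2 \<omega>)) \<in> measurable M ?N"
    using indep by (rule indep_var_rv1)
  have Q: "?Q \<in> sets (?\<mu> \<Otimes>\<^sub>M ?\<nu>)" and Q': "?Q \<in> sets (?N \<Otimes>\<^sub>M ?N)" by simp_all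
  have slice: "emeasure ?\<nu> (Pair z -` ?Q) = ennreal (?g z)" for z
  proof -
    have "Pair z -` ?Q = {p \<in> space ?N. fst z * fst p > x \<and> snd z * snd p > y}"
      by (auto simp: space_pair_measure)
    moreover have "{p \<in> space ?N. fst z * fst p > x \<and> snd z * snd p > y} \<in> sets ?N" by measurable
    ultimately show ?thesis
      by (simp add: emeasure_distr emeasure_eq_measure vimage_def Int_def conj_commute space_pair_measure)
  qed
  have "\<P>(\<omega> in M. U1 \<omega> * V1 \<omega> > x \<and> U2 \<omega> * V2 \<omega> > y)
      = measure (distr M (?N \<Otimes>\<^sub>M ?N) (\<lambda>\<omega>. ((U1 \<omega>, U2 \<omega>), (V1 \<omega>, V2 \<omega>)))) ?Q"
    by (subst measure_distr[OF _ Q']) (auto simp: space_pair_measure intro!: arg_cong[where f="measure M"])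
  also have "\<dots> = measure (?\<mu> \<Otimes>\<^sub>M ?\<nu>) ?Q"
    using indep unfolding indep_var_distribution_eq by simp
  also have "\<dots> = enn2real (\<integral>\<^sup>+z. ennreal (?g z) \<partial>?\<mu>)"
    unfolding measure_def \<nu>.emeasure_pair_measure_alt[OF Q] slice ..
  also have "\<dots> = (\<integral>z. ?g z \<partial>?\<mu>)"
    by (rule integral_eq_nn_integral[symmetric]) auto
  finally show ?thesis .
qed

lemma prob_scaled_pair_le:
  fixes V1 V2 :: "'a \<Rightarrow> real"
  assumes [measurable]: "V1 \<in> borel_measurable M" "V2 \<in> borel_measurable M"
    and "0 \<le> z1" "z1 \<le> B" "0 \<le> z2" "z2 \<le> B" "0 < B" "0 < x" "0 < y"
  shows "\<P>(\<omega> in M. z1 * V1 \<omega> > x \<and> z2 * V2 \<omega> > y) \<le> \<P>(\<omega> in M. V1 \<omega> > x / B \<and> V2 \<omega> > y / B)"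
  by (rule finite_measure_mono) (use assms less_div_of_mult_less in \<open>auto simp: less_imp_le\<close>)

lemma prob_weighted_triple_le:
  fixes V1 V2 V3 Z1 Z2 Z3 :: "'a \<Rightarrow> real"
  assumes [measurable]: "Z1 \<in> borel_measurable M" "Z2 \<in> borel_measurable M" "Z3 \<in> borel_measurable M"
    "V1 \<in> borel_measurable M" "V2 \<in> borel_measurable M" "V3 \<in> borel_measurable M"
    and B: "0 < B" "AE \<omega> in M. 0 \<le> V1 \<omega> \<and> V1 \<omega> \<le> B"
      "AE \<omega> in M. 0 \<le> V2 \<omega> \<and> V2 \<omega> \<le> B" "AE \<omega> in M. 0 \<le> V3 \<omega> \<and> V3 \<omega> \<le> B"
    and t: "0 \<le> t1" "0 \<le> t2" "0 \<le> t3"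
  shows "\<P>(\<omega> in M. \<bar>V1 \<omega> * Z1 \<omega>\<bar> > t1 \<and> V2 \<omega> * Z2 \<omega> > t2 \<and> V3 \<omega> * Z3 \<omega> > t3)
       \<le> \<P>(\<omega> in M. \<bar>Z1 \<omega>\<bar> > t1 / B \<and> Z2 \<omega> > t2 / B \<and> Z3 \<omega> > t3 / B)"
proof (rule finite_measure_mono_AE)
  show "AE \<omega> in M. \<omega> \<in> {\<omega> \<in> space M. \<bar>V1 \<omega> * Z1 \<omega>\<bar> > t1 \<and> V2 \<omega> * Z2 \<omega> > t2 \<and> V3 \<omega> * Z3 \<omega> > t3}
      \<longrightarrow> \<omega> \<in> {\<omega> \<in> space M. \<bar>Z1 \<omega>\<bar> > t1 / B \<and> Z2 \<omega> > t2 / B \<and> Z3 \<omega> > t3 / B}"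
    using B(2-4)
  proof eventually_elim
    case (elim \<omega>)
    then have V: "0 \<le> V1 \<omega>" "V1 \<omega> \<le> B" "0 \<le> V2 \<omega>" "V2 \<omega> \<le> B" "0 \<le> V3 \<omega>" "V3 \<omega> \<le> B"
      by auto
    then show ?case
      using less_div_of_mult_less[OF V(1,2) B(1) t(1), of "\<bar>Z1 \<omega>\<bar>"]
        less_div_of_mult_less[OF V(3,4) B(1) t(2), of "Z2 \<omega>"]
        less_div_of_mult_less[OF V(5,6) B(1) t(3), of "Z3 \<omega>"]
      by (auto simp: abs_mult)
  qed
qed measurable

lemma tendsto_prob_scaled_pair:
  fixes V1 V2 :: "'a \<Rightarrow> real" and F G :: "real \<Rightarrow> real"
  assumes lim: "\<And>b c. b > 0 \<Longrightarrow> c > 0 \<Longrightarrow>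
      ((\<lambda>w. \<P>(\<omega> in M. V1 \<omega> > b * fst w \<and> V2 \<omega> > c * snd w) / (F (fst w) * G (snd w)))
        \<longlongrightarrow> L * b powr - a * c powr - a') (at_top \<times>\<^sub>F at_top)"
    and z: "0 \<le> z1" "0 \<le> z2"
  shows "((\<lambda>w. \<P>(\<omega> in M. z1 * V1 \<omega> > fst w \<and> z2 * V2 \<omega> > snd w) / (F (fst w) * G (snd w)))
           \<longlongrightarrow> L * z1 powr a * z2 powr a') (at_top \<times>\<^sub>F at_top)"
proof (cases "z1 = 0 \<or> z2 = 0")
  case True
  have "\<forall>\<^sub>F w in at_top \<times>\<^sub>F at_top.
      \<P>(\<omega> in M. z1 * V1 \<omega> > fst w \<and> z2 * V2 \<omega> > snd w) / (F (fst w) * G (snd w)) = L * z1 powr a * z2 powr a'"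
    using eventually_at_top_prod_pos by eventually_elim (use True in auto)
  then show ?thesis by (rule tendsto_eventually)
next
  case False
  with z have pos: "z1 > 0" "z2 > 0" by auto
  have "{\<omega> \<in> space M. z1 * V1 \<omega> > x \<and> z2 * V2 \<omega> > y} = {\<omega> \<in> space M. V1 \<omega> > (1 / z1) * x \<and> V2 \<omega> > (1 / z2) * y}"
    for x y using pos by (auto simp: field_simps)
  moreover have "(1 / z1) powr - a = z1 powr a" "(1 / z2) powr - a' = z2 powr a'"
    using pos by (simp_all add: powr_divide powr_minus_divide)
  ultimately show ?thesis using lim[of "1 / z1" "1 / z2"] pos by simp
qed

lemma eventually_prob_ratio_less:
  fixes V1 V2 :: "'a \<Rightarrow> real" and F G :: "real \<Rightarrow> real"
  assumes lim: "\<And>b c. b > 0 \<Longrightarrow> c > 0 \<Longrightarrow>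
      ((\<lambda>w. \<P>(\<omega> in M. V1 \<omega> > b * fst w \<and> V2 \<omega> > c * snd w) / (F (fst w) * G (snd w)))
        \<longlongrightarrow> L * b powr - a * c powr - a') (at_top \<times>\<^sub>F at_top)"
    and "0 < B"
  shows "\<forall>\<^sub>F w in at_top \<times>\<^sub>F at_top. 0 < fst w \<and> 0 < snd w \<and>
      \<P>(\<omega> in M. V1 \<omega> > fst w / B \<and> V2 \<omega> > snd w / B) / (F (fst w) * G (snd w)) < L * B powr a * B powr a' + 1"
proof -
  have "L * (1 / B) powr - a * (1 / B) powr - a' < L * B powr a * B powr a' + 1"
    using \<open>0 < B\<close> by (simp add: powr_divide powr_minus_divide)
  with lim[of "1 / B" "1 / B"] \<open>0 < B\<close>
  have "\<forall>\<^sub>F w in at_top \<times>\<^sub>F at_top. \<P>(\<omega> in M. V1 \<omega> > 1 / B * fst w \<and> V2 \<omega> > 1 / B * snd w)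
      / (F (fst w) * G (snd w)) < L * B powr a * B powr a' + 1"
    by (auto dest: order_tendstoD(2))
  then show ?thesis
    using eventually_at_top_prod_pos by eventually_elim (simp add: mult.commute)
qed

theorem tendsto_joint_tail_products:
  fixes U1 U2 V1 V2 :: "'a \<Rightarrow> real" and F G :: "real \<Rightarrow> real"
  assumes [measurable]: "V1 \<in> borel_measurable M" "V2 \<in> borel_measurable M"
    and indep: "indep_var (borel \<Otimes>\<^sub>M borel) (\<lambda>\<omega>. (U1 \<omega>, U2 \<omega>)) (borel \<Otimes>\<^sub>M borel) (\<lambda>\<omega>. (V1 \<omega>, V2 \<omega>))"
    and bounded: "AE \<omega> in M. 0 \<le> U1 \<omega> \<and> U1 \<omega> \<le> B \<and> 0 \<le> U2 \<omega> \<and> U2 \<omega> \<le> B" and "0 < B"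
    and pos: "\<And>x. 0 < F x" "\<And>y. 0 < G y"
    and lim: "\<And>b c. b > 0 \<Longrightarrow> c > 0 \<Longrightarrow>
      ((\<lambda>w. \<P>(\<omega> in M. V1 \<omega> > b * fst w \<and> V2 \<omega> > c * snd w) / (F (fst w) * G (snd w)))
        \<longlongrightarrow> L * b powr - a * c powr - a') (at_top \<times>\<^sub>F at_top)"
  shows "((\<lambda>w. \<P>(\<omega> in M. U1 \<omega> * V1 \<omega> > fst w \<and> U2 \<omega> * V2 \<omega> > snd w) / (F (fst w) * G (snd w)))
           \<longlongrightarrow> L * (\<integral>\<omega>. U1 \<omega> powr a * U2 \<omega> powr a' \<partial>M)) (at_top \<times>\<^sub>F at_top)"
proof -
  let ?N = "borel \<Otimes>\<^sub>M borel :: (real \<times> real) measure"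
  let ?\<mu> = "distr M ?N (\<lambda>\<omega>. (U1 \<omega>, U2 \<omega>))"
  define g where "g w z = \<P>(\<omega> in M. fst z * V1 \<omega> > fst w \<and> snd z * V2 \<omega> > snd w) / (F (fst w) * G (snd w))"
    for w z
  define K where "K = L * B powr a * B powr a' + 1"
  have U[measurable]: "(\<lambda>\<omega>. (U1 \<omega>, U2 \<omega>)) \<in> measurable M ?N"
    using indep by (rule indep_var_rv1)
  interpret \<mu>: prob_space ?\<mu> by (rule prob_space_distr) simp
  have box: "AE z in ?\<mu>. 0 \<le> fst z \<and> fst z \<le> B \<and> 0 \<le> snd z \<and> snd z \<le> B"
    using bounded by (subst AE_distr_iff) auto
  have "\<forall>\<^sub>F w in at_top \<times>\<^sub>F at_top. 0 < fst w \<and> 0 < snd w \<and>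
      \<P>(\<omega> in M. V1 \<omega> > fst w / B \<and> V2 \<omega> > snd w / B) / (F (fst w) * G (snd w)) < K"
    unfolding K_def by (rule eventually_prob_ratio_less[OF lim \<open>0 < B\<close>])
  then have bound: "\<forall>\<^sub>F w in at_top \<times>\<^sub>F at_top. AE z in ?\<mu>. norm (g w z) \<le> K"
  proof eventually_elim
    case w: (elim w)
    have den: "0 < F (fst w) * G (snd w)" using pos by simp
    show ?case using box
    proof eventually_elim
      case (elim z)
      then have "\<P>(\<omega> in M. fst z * V1 \<omega> > fst w \<and> snd z * V2 \<omega> > snd w)
          \<le> \<P>(\<omega> in M. V1 \<omega> > fst w / B \<and> V2 \<omega> > snd w / B)"
        using \<open>0 < B\<close> w by (intro prob_scaled_pair_le) auto
      then have "g w z \<le> \<P>(\<omega> in M. V1 \<omega> > fst w / B \<and> V2 \<omega> > snd w / B) / (F (fst w) * G (snd w))"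
        unfolding g_def using den by (simp add: divide_right_mono)
      moreover have "0 \<le> g w z" unfolding g_def using den by simp
      ultimately show ?case using w by simp
    qed
  qed
  have "((\<lambda>w. \<integral>z. g w z \<partial>?\<mu>) \<longlongrightarrow> (\<integral>z. L * fst z powr a * snd z powr a' \<partial>?\<mu>)) (at_top \<times>\<^sub>F at_top)"
  proof (rule integral_dominated_convergence_at_top_prod[OF _ _ _ _ bound])
    show "AE z in ?\<mu>. ((\<lambda>w. g w z) \<longlongrightarrow> L * fst z powr a * snd z powr a') (at_top \<times>\<^sub>F at_top)"
      using box by eventually_elim (auto simp: g_def intro!: tendsto_prob_scaled_pair[OF lim])
  qed (auto simp: g_def)
  moreover have "(\<integral>z. g w z \<partial>?\<mu>)
      = \<P>(\<omega> in M. U1 \<omega> * V1 \<omega> > fst w \<and> U2 \<omega> * V2 \<omega> > snd w) / (F (fst w) * G (snd w))" for w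
    unfolding g_def by (simp add: prob_products_eq_integral[OF _ _ indep])
  moreover have "(\<integral>z. L * fst z powr a * snd z powr a' \<partial>?\<mu>) = L * (\<integral>\<omega>. U1 \<omega> powr a * U2 \<omega> powr a' \<partial>M)"
    by (simp add: integral_distr mult.assoc)
  ultimately show ?thesis by simp
qed

end

section \<open>Tail asymptotics of a single pair of summands\<close>

locale GTAI_weighted_sums =
  fixes M :: "'a measure" and n m :: nat
    and X Y \<Theta> \<Delta> :: "nat \<Rightarrow> 'a \<Rightarrow> real"
    and C \<alpha> \<alpha>' :: "nat \<Rightarrow> real"
  assumes prob: "prob_space M"
    and nm: "n \<ge> 1" "m \<ge> 1"
    and meas_X: "\<And>i. i \<in> {1..n} \<Longrightarrow> X i \<in> borel_measurable M"
    and meas_Y: "\<And>j. j \<in> {1..m} \<Longrightarrow> Y j \<in> borel_measurable M"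
    and meas_Th: "\<And>i. i \<in> {1..n} \<Longrightarrow> \<Theta> i \<in> borel_measurable M"
    and meas_De: "\<And>j. j \<in> {1..m} \<Longrightarrow> \<Delta> j \<in> borel_measurable M"
    and gtai: "GTAI M n m X Y"
    and Th_nonneg: "\<And>i. i \<in> {1..n} \<Longrightarrow> AE \<omega> in M. \<Theta> i \<omega> \<ge> 0"
    and De_nonneg: "\<And>j. j \<in> {1..m} \<Longrightarrow> AE \<omega> in M. \<Delta> j \<omega> \<ge> 0"
    and Th_bdd: "\<And>i. i \<in> {1..n} \<Longrightarrow> \<exists>b. AE \<omega> in M. \<Theta> i \<omega> \<le> b"
    and De_bdd: "\<And>j. j \<in> {1..m} \<Longrightarrow> \<exists>b. AE \<omega> in M. \<Delta> j \<omega> \<le> b"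
    and indep: "prob_space.indep_var M
                  (PiM (idx n m) (\<lambda>_. borel)) (joint_vec n m \<Theta> \<Delta>)
                  (PiM (idx n m) (\<lambda>_. borel)) (joint_vec n m X Y)"
    and sai: "\<And>i. i \<in> {1..min n m} \<Longrightarrow> SAI M (X i) (Y i) (C i)"
    and indep_XY: "\<And>i j. i \<in> {1..n} \<Longrightarrow> j \<in> {1..m} \<Longrightarrow> i \<noteq> j \<Longrightarrow>
                     prob_space.indep_var M borel (X i) borel (Y j)"
    and alpha: "\<And>i. i \<in> {1..n} \<Longrightarrow> \<alpha> i \<ge> 0"
    and alpha': "\<And>j. j \<in> {1..m} \<Longrightarrow> \<alpha>' j \<ge> 0"
    and rv_F: "\<And>i. i \<in> {1..n} \<Longrightarrow> regvar_tail (tail M (X i)) (\<alpha> i)"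
    and rv_G: "\<And>j. j \<in> {1..m} \<Longrightarrow> regvar_tail (tail M (Y j)) (\<alpha>' j)"
begin

sublocale prob_space M by (rule prob)

lemma tail_X_pos: "i \<in> {1..n} \<Longrightarrow> tail M (X i) x > 0"
  and tail_Y_pos: "j \<in> {1..m} \<Longrightarrow> tail M (Y j) y > 0"
  using gtai unfolding GTAI_def unbounded_above_def tail_def by auto

lemma tail_X_nonzero: "i \<in> {1..n} \<Longrightarrow> tail M (X i) x \<noteq> 0"
  and tail_Y_nonzero: "j \<in> {1..m} \<Longrightarrow> tail M (Y j) y \<noteq> 0"
  using tail_X_pos tail_Y_pos by (metis less_irrefl)+

definition pair_const :: "nat \<Rightarrow> nat \<Rightarrow> real" where
  "pair_const k j = (if k = j then C k else 1)"

lemma pair_const_pos: "k \<in> {1..n} \<Longrightarrow> j \<in> {1..m} \<Longrightarrow> pair_const k j > 0"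
  using sai[of k] unfolding pair_const_def SAI_def by auto

lemma pair_tail_ratio:
  assumes k: "k \<in> {1..n}" and j: "j \<in> {1..m}"
  shows "((\<lambda>w. \<P>(\<omega> in M. X k \<omega> > fst w \<and> Y j \<omega> > snd w) / (tail M (X k) (fst w) * tail M (Y j) (snd w)))
          \<longlongrightarrow> pair_const k j) (at_top \<times>\<^sub>F at_top)"
proof (cases "k = j")
  case True
  with k j have "k \<in> {1..min n m}" by auto
  then have C: "C k > 0" and "(\<lambda>(x, y). \<P>(\<omega> in M. X k \<omega> > x \<and> Y k \<omega> > y))
        \<sim>[at_top \<times>\<^sub>F at_top] (\<lambda>(x, y). C k * tail M (X k) x * tail M (Y k) y)"
    using sai unfolding SAI_def by auto
  from asymp_equivD_strong[OF this(2)]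
  have "((\<lambda>w. \<P>(\<omega> in M. X k \<omega> > fst w \<and> Y k \<omega> > snd w) / (C k * tail M (X k) (fst w) * tail M (Y k) (snd w)))
          \<longlongrightarrow> 1) (at_top \<times>\<^sub>F at_top)"
    using C tail_X_nonzero[OF k] tail_Y_nonzero[OF j] True by (simp add: case_prod_beta')
  from tendsto_mult_left[OF this, of "C k"] show ?thesis
    using C True by (simp add: pair_const_def)
next
  case False
  have "\<P>(\<omega> in M. X k \<omega> > x \<and> Y j \<omega> > y) = tail M (X k) x * tail M (Y j) y" for x y
    using prob_indep_random_variable[OF indep_XY[OF k j False], of "{x<..}" "{y<..}"]
    by (simp add: tail_def)
  then show ?thesis
    using False tail_X_nonzero[OF k] tail_Y_nonzero[OF j] by (simp add: pair_const_def)
qed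

lemma pair_tail_ratio_rescaled:
  assumes k: "k \<in> {1..n}" and j: "j \<in> {1..m}" and "b > 0" "c > 0"
  shows "((\<lambda>w. \<P>(\<omega> in M. X k \<omega> > b * fst w \<and> Y j \<omega> > c * snd w) / (tail M (X k) (fst w) * tail M (Y j) (snd w)))
          \<longlongrightarrow> pair_const k j * b powr - \<alpha> k * c powr - \<alpha>' j) (at_top \<times>\<^sub>F at_top)"
  using regvar_tail_ratio_rescale[OF pair_tail_ratio[OF k j] rv_F[OF k] rv_G[OF j] assms(3,4)]
    tail_X_nonzero[OF k] tail_Y_nonzero[OF j] by simp

lemma weights_bounded:
  obtains B where "B > 0"
    "\<And>i. i \<in> {1..n} \<Longrightarrow> AE \<omega> in M. 0 \<le> \<Theta> i \<omega> \<and> \<Theta> i \<omega> \<le> B"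
    "\<And>j. j \<in> {1..m} \<Longrightarrow> AE \<omega> in M. 0 \<le> \<Delta> j \<omega> \<and> \<Delta> j \<omega> \<le> B"
proof -
  obtain bT where bT: "\<And>i. i \<in> {1..n} \<Longrightarrow> AE \<omega> in M. \<Theta> i \<omega> \<le> bT i" using Th_bdd by metis
  obtain bD where bD: "\<And>j. j \<in> {1..m} \<Longrightarrow> AE \<omega> in M. \<Delta> j \<omega> \<le> bD j" using De_bdd by metis
  define B where "B = Max (insert 1 (bT ` {1..n} \<union> bD ` {1..m}))"
  have B: "1 \<le> B" "\<And>i. i \<in> {1..n} \<Longrightarrow> bT i \<le> B" "\<And>j. j \<in> {1..m} \<Longrightarrow> bD j \<le> B"
    unfolding B_def by (auto intro!: Max_ge simp del: Max_insert)
  show ?thesis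
  proof (rule that)
    show "AE \<omega> in M. 0 \<le> \<Theta> i \<omega> \<and> \<Theta> i \<omega> \<le> B" if "i \<in> {1..n}" for i
      using Th_nonneg[OF that] bT[OF that] by eventually_elim (use B(2)[OF that] in auto)
    show "AE \<omega> in M. 0 \<le> \<Delta> j \<omega> \<and> \<Delta> j \<omega> \<le> B" if "j \<in> {1..m}" for j
      using De_nonneg[OF that] bD[OF that] by eventually_elim (use B(3)[OF that] in auto)
  qed (use B in auto)
qed

lemma indep_weight_pair:
  assumes k: "k \<in> {1..n}" and j: "j \<in> {1..m}"
  shows "indep_var (borel \<Otimes>\<^sub>M borel) (\<lambda>\<omega>. (\<Theta> k \<omega>, \<Delta> j \<omega>)) (borel \<Otimes>\<^sub>M borel) (\<lambda>\<omega>. (X k \<omega>, Y j \<omega>))"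
proof -
  define sel :: "(nat + nat \<Rightarrow> real) \<Rightarrow> real \<times> real" where "sel f = (f (Inl k), f (Inr j))" for f
  have "Inl k \<in> idx n m" "Inr j \<in> idx n m" using k j by (auto simp: idx_def)
  then have "sel \<in> measurable (PiM (idx n m) (\<lambda>_. borel)) (borel \<Otimes>\<^sub>M borel)"
    unfolding sel_def by measurable
  from indep_var_compose[OF indep this this] show ?thesis
    using \<open>Inl k \<in> idx n m\<close> \<open>Inr j \<in> idx n m\<close> by (simp add: o_def sel_def joint_vec_def)
qed

definition breiman_const :: "nat \<Rightarrow> nat \<Rightarrow> real" where
  "breiman_const k j = pair_const k j * (\<integral>\<omega>. \<Theta> k \<omega> powr \<alpha> k * \<Delta> j \<omega> powr \<alpha>' j \<partial>M)"

lemma breiman_const_nonneg: "k \<in> {1..n} \<Longrightarrow> j \<in> {1..m} \<Longrightarrow> breiman_const k j \<ge> 0"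
  unfolding breiman_const_def using pair_const_pos[of k j] by (intro mult_nonneg_nonneg integral_nonneg) auto

lemma weighted_pair_ratio:
  assumes k: "k \<in> {1..n}" and j: "j \<in> {1..m}"
  shows "((\<lambda>w. \<P>(\<omega> in M. \<Theta> k \<omega> * X k \<omega> > fst w \<and> \<Delta> j \<omega> * Y j \<omega> > snd w)
            / (tail M (X k) (fst w) * tail M (Y j) (snd w)))
          \<longlongrightarrow> breiman_const k j) (at_top \<times>\<^sub>F at_top)"
proof -
  obtain B where "B > 0" "AE \<omega> in M. 0 \<le> \<Theta> k \<omega> \<and> \<Theta> k \<omega> \<le> B" "AE \<omega> in M. 0 \<le> \<Delta> j \<omega> \<and> \<Delta> j \<omega> \<le> B"
    using weights_bounded k j by metis
  then show ?thesis unfolding breiman_const_def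
    by (intro tendsto_joint_tail_products[OF meas_X[OF k] meas_Y[OF j] indep_weight_pair[OF k j] _ \<open>B > 0\<close>]
        tail_X_pos[OF k] tail_Y_pos[OF j] pair_tail_ratio_rescaled[OF k j]) auto
qed

section \<open>Negligible terms\<close>

abbreviation pairs :: "(nat \<times> nat) set" where
  "pairs \<equiv> {1..n} \<times> {1..m}"

definition asymp_tail :: "real \<times> real \<Rightarrow> real" where
  "asymp_tail w = (\<Sum>p\<in>pairs. breiman_const (fst p) (snd p) * tail M (X (fst p)) (fst w) * tail M (Y (snd p)) (snd w))"

lemma asymp_tail_nonneg: "asymp_tail w \<ge> 0"
  unfolding asymp_tail_def by (intro sum_nonneg) (auto intro!: mult_nonneg_nonneg breiman_const_nonneg)

lemma asymp_tail_ge: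
  assumes "k \<in> {1..n}" "j \<in> {1..m}"
  shows "breiman_const k j * tail M (X k) (fst w) * tail M (Y j) (snd w) \<le> asymp_tail w"
proof -
  have "(\<lambda>p. breiman_const (fst p) (snd p) * tail M (X (fst p)) (fst w) * tail M (Y (snd p)) (snd w)) (k, j)
      \<le> asymp_tail w"
    unfolding asymp_tail_def
    by (rule member_le_sum) (use assms in \<open>auto intro!: mult_nonneg_nonneg breiman_const_nonneg\<close>)
  then show ?thesis by simp
qed

text \<open>
  If \<open>breiman_const k j = 0\<close>, \<open>asymp_tail\<close> may vanish identically, so a bound against
  \<open>F\<^sub>k G\<^sub>j\<close> alone would not suffice; \<open>E\<close> must then vanish eventually.
\<close>

lemma smallo_asymp_tailI:
  assumes k: "k \<in> {1..n}" and j: "j \<in> {1..m}"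
    and lim: "((\<lambda>w. E w / (tail M (X k) (fst w) * tail M (Y j) (snd w))) \<longlongrightarrow> 0) (at_top \<times>\<^sub>F at_top)"
    and vanish: "breiman_const k j = 0 \<Longrightarrow> \<forall>\<^sub>F w in at_top \<times>\<^sub>F at_top. E w = 0"
  shows "E \<in> o[at_top \<times>\<^sub>F at_top](asymp_tail)"
proof (cases "breiman_const k j = 0")
  case True
  show ?thesis
  proof (rule landau_o.smallI)
    fix c :: real assume "c > 0"
    show "\<forall>\<^sub>F w in at_top \<times>\<^sub>F at_top. norm (E w) \<le> c * norm (asymp_tail w)"
      using vanish[OF True] by eventually_elim (use \<open>c > 0\<close> in simp)
  qed
next
  case False
  then have W: "breiman_const k j > 0" using breiman_const_nonneg[OF k j] by simp
  have "E \<in> o[at_top \<times>\<^sub>F at_top](\<lambda>w. tail M (X k) (fst w) * tail M (Y j) (snd w))"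
    using lim by (rule smalloI_tendsto) (simp add: tail_X_nonzero[OF k] tail_Y_nonzero[OF j])
  moreover have "(\<lambda>w. tail M (X k) (fst w) * tail M (Y j) (snd w)) \<in> O[at_top \<times>\<^sub>F at_top](asymp_tail)"
  proof (rule bigoI[of _ "1 / breiman_const k j"], rule always_eventually, rule allI)
    fix w
    show "norm (tail M (X k) (fst w) * tail M (Y j) (snd w)) \<le> 1 / breiman_const k j * norm (asymp_tail w)"
      using asymp_tail_ge[OF k j, of w] asymp_tail_nonneg[of w] W tail_X_pos[OF k] tail_Y_pos[OF j]
      by (simp add: field_simps less_imp_le)
  qed
  ultimately show ?thesis by (rule landau_o.small_big_trans)
qed

lemma breiman_const_eq_0_AE:
  assumes k: "k \<in> {1..n}" and j: "j \<in> {1..m}" and "breiman_const k j = 0"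
  shows "AE \<omega> in M. \<Theta> k \<omega> = 0 \<or> \<Delta> j \<omega> = 0"
proof -
  note [measurable] = meas_Th[OF k] meas_De[OF j]
  obtain B where B: "AE \<omega> in M. 0 \<le> \<Theta> k \<omega> \<and> \<Theta> k \<omega> \<le> B" "AE \<omega> in M. 0 \<le> \<Delta> j \<omega> \<and> \<Delta> j \<omega> \<le> B"
    using weights_bounded k j by metis
  have "integrable M (\<lambda>\<omega>. \<Theta> k \<omega> powr \<alpha> k * \<Delta> j \<omega> powr \<alpha>' j)"
  proof (rule integrable_const_bound[where B="B powr \<alpha> k * B powr \<alpha>' j"])
    show "AE \<omega> in M. norm (\<Theta> k \<omega> powr \<alpha> k * \<Delta> j \<omega> powr \<alpha>' j) \<le> B powr \<alpha> k * B powr \<alpha>' j"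
      using B by eventually_elim (use alpha[OF k] alpha'[OF j] in \<open>auto intro!: mult_mono powr_mono2\<close>)
  qed measurable
  moreover have "(\<integral>\<omega>. \<Theta> k \<omega> powr \<alpha> k * \<Delta> j \<omega> powr \<alpha>' j \<partial>M) = 0"
    using assms pair_const_pos[OF k j] unfolding breiman_const_def by simp
  ultimately have "AE \<omega> in M. \<Theta> k \<omega> powr \<alpha> k * \<Delta> j \<omega> powr \<alpha>' j = 0"
    by (subst integral_nonneg_eq_0_iff_AE[symmetric]) auto
  then show ?thesis by eventually_elim simp
qed

lemma prob_eq_0_if_breiman_const_eq_0:
  assumes "k \<in> {1..n}" "j \<in> {1..m}" "breiman_const k j = 0"
    and "\<And>\<omega>. \<omega> \<in> space M \<Longrightarrow> P \<omega> \<Longrightarrow> \<Theta> k \<omega> \<noteq> 0 \<and> \<Delta> j \<omega> \<noteq> 0"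
  shows "\<P>(\<omega> in M. P \<omega>) = 0"
proof -
  have "AE \<omega> in M. \<not> P \<omega>"
    using breiman_const_eq_0_AE[OF assms(1-3)] AE_space by eventually_elim (use assms(4) in blast)
  then show ?thesis by (simp add: measure_def emeasure_eq_0_AE)
qed

lemma weighted_pair_error_smallo:
  assumes k: "k \<in> {1..n}" and j: "j \<in> {1..m}" and q: "q > 0"
  shows "(\<lambda>w. \<P>(\<omega> in M. \<Theta> k \<omega> * X k \<omega> > q * fst w \<and> \<Delta> j \<omega> * Y j \<omega> > q * snd w)
           - breiman_const k j * q powr - \<alpha> k * q powr - \<alpha>' j * tail M (X k) (fst w) * tail M (Y j) (snd w))
         \<in> o[at_top \<times>\<^sub>F at_top](asymp_tail)"
proof (rule smallo_asymp_tailI[OF k j])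
  let ?c = "breiman_const k j * q powr - \<alpha> k * q powr - \<alpha>' j"
  have "((\<lambda>w. \<P>(\<omega> in M. \<Theta> k \<omega> * X k \<omega> > q * fst w \<and> \<Delta> j \<omega> * Y j \<omega> > q * snd w)
            / (tail M (X k) (fst w) * tail M (Y j) (snd w)) - ?c) \<longlongrightarrow> ?c - ?c) (at_top \<times>\<^sub>F at_top)"
    using regvar_tail_ratio_rescale[OF weighted_pair_ratio[OF k j] rv_F[OF k] rv_G[OF j] q q]
    by (intro tendsto_diff tendsto_const) (simp_all add: tail_X_nonzero[OF k] tail_Y_nonzero[OF j])
  then show "((\<lambda>w. (\<P>(\<omega> in M. \<Theta> k \<omega> * X k \<omega> > q * fst w \<and> \<Delta> j \<omega> * Y j \<omega> > q * snd w)
           - ?c * tail M (X k) (fst w) * tail M (Y j) (snd w)) / (tail M (X k) (fst w) * tail M (Y j) (snd w)))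
       \<longlongrightarrow> 0) (at_top \<times>\<^sub>F at_top)"
    by (simp add: diff_divide_distrib tail_X_nonzero[OF k] tail_Y_nonzero[OF j])
  assume W: "breiman_const k j = 0"
  show "\<forall>\<^sub>F w in at_top \<times>\<^sub>F at_top. \<P>(\<omega> in M. \<Theta> k \<omega> * X k \<omega> > q * fst w \<and> \<Delta> j \<omega> * Y j \<omega> > q * snd w)
           - ?c * tail M (X k) (fst w) * tail M (Y j) (snd w) = 0"
    using eventually_at_top_prod_pos
  proof eventually_elim
    case (elim w)
    with q have "q * fst w > 0" "q * snd w > 0" by auto
    then show ?case using W by (auto intro!: prob_eq_0_if_breiman_const_eq_0[OF k j W])
  qed
qed

lemma extra_large_smallo:
  fixes V Z :: "'a \<Rightarrow> real" and s :: "real \<times> real \<Rightarrow> real"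
  assumes k: "k \<in> {1..n}" and j: "j \<in> {1..m}"
    and VZ[measurable]: "V \<in> borel_measurable M" "Z \<in> borel_measurable M"
    and B: "0 < B" "AE \<omega> in M. 0 \<le> V \<omega> \<and> V \<omega> \<le> B"
      "AE \<omega> in M. 0 \<le> \<Theta> k \<omega> \<and> \<Theta> k \<omega> \<le> B" "AE \<omega> in M. 0 \<le> \<Delta> j \<omega> \<and> \<Delta> j \<omega> \<le> B"
    and s: "filterlim s at_top (at_top \<times>\<^sub>F at_top)"
    and gtai_Z: "((\<lambda>(a, b, c). \<P>(\<omega> in M. \<bar>Z \<omega>\<bar> > a \<and> X k \<omega> > b \<and> Y j \<omega> > c)
                    / \<P>(\<omega> in M. X k \<omega> > b \<and> Y j \<omega> > c)) \<longlongrightarrow> 0) (at_top \<times>\<^sub>F at_top \<times>\<^sub>F at_top)"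
    and abc: "a > 0" "b > 0" "c > 0"
  shows "(\<lambda>w. \<P>(\<omega> in M. \<bar>V \<omega> * Z \<omega>\<bar> > a * s w \<and> \<Theta> k \<omega> * X k \<omega> > b * fst w \<and> \<Delta> j \<omega> * Y j \<omega> > c * snd w))
         \<in> o[at_top \<times>\<^sub>F at_top](asymp_tail)"
proof (rule smallo_asymp_tailI[OF k j])
  note [measurable] = meas_X[OF k] meas_Y[OF j] meas_Th[OF k] meas_De[OF j]
  define E where "E w = \<P>(\<omega> in M. \<bar>V \<omega> * Z \<omega>\<bar> > a * s w \<and> \<Theta> k \<omega> * X k \<omega> > b * fst w \<and> \<Delta> j \<omega> * Y j \<omega> > c * snd w)" for w
  define H where "H w = \<P>(\<omega> in M. \<bar>Z \<omega>\<bar> > a / B * s w \<and> X k \<omega> > b / B * fst w \<and> Y j \<omega> > c / B * snd w)" for w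
  define J where "J w = \<P>(\<omega> in M. X k \<omega> > b / B * fst w \<and> Y j \<omega> > c / B * snd w)" for w
  have pos: "a / B > 0" "b / B > 0" "c / B > 0" using abc B by auto
  have ev_pos: "\<forall>\<^sub>F w in at_top \<times>\<^sub>F at_top. 0 < s w \<and> 0 < fst w \<and> 0 < snd w"
    using eventually_compose_filterlim[OF eventually_gt_at_top s] eventually_at_top_prod_pos
    by eventually_elim simp
  have "filterlim (\<lambda>w. (a / B * s w, b / B * fst w, c / B * snd w)) (at_top \<times>\<^sub>F at_top \<times>\<^sub>F at_top) (at_top \<times>\<^sub>F at_top)"
    by (intro filterlim_Pair filterlim_tendsto_pos_mult_at_top[OF tendsto_const] pos s filterlim_fst filterlim_snd)
  from filterlim_compose[OF gtai_Z this] have HJ: "((\<lambda>w. H w / J w) \<longlongrightarrow> 0) (at_top \<times>\<^sub>F at_top)"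
    by (simp add: H_def J_def)
  have J: "((\<lambda>w. J w / (tail M (X k) (fst w) * tail M (Y j) (snd w)))
      \<longlongrightarrow> pair_const k j * (b / B) powr - \<alpha> k * (c / B) powr - \<alpha>' j) (at_top \<times>\<^sub>F at_top)"
    unfolding J_def by (rule pair_tail_ratio_rescaled[OF k j pos(2,3)])
  have H_le_J: "H w \<le> J w" for w
    unfolding H_def J_def by (rule finite_measure_mono) auto
  have E_le_H: "\<forall>\<^sub>F w in at_top \<times>\<^sub>F at_top. E w \<le> H w"
    using ev_pos
  proof eventually_elim
    case (elim w)
    with abc have "0 \<le> a * s w" "0 \<le> b * fst w" "0 \<le> c * snd w" by auto
    from prob_weighted_triple_le[OF VZ(2) meas_X[OF k] meas_Y[OF j] VZ(1) meas_Th[OF k] meas_De[OF j] B this]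
    show ?case
      unfolding E_def H_def by simp
  qed
  show "((\<lambda>w. E w / (tail M (X k) (fst w) * tail M (Y j) (snd w))) \<longlongrightarrow> 0) (at_top \<times>\<^sub>F at_top)"
    by (rule tendsto_zero_by_dominating_ratio[OF _ E_le_H _ H_le_J HJ J])
      (simp_all add: E_def H_def tail_X_pos[OF k] tail_Y_pos[OF j])
  assume W: "breiman_const k j = 0"
  show "\<forall>\<^sub>F w in at_top \<times>\<^sub>F at_top. E w = 0"
    using ev_pos
  proof eventually_elim
    case (elim w)
    with abc have "b * fst w > 0" "c * snd w > 0" by auto
    then show ?case unfolding E_def by (intro prob_eq_0_if_breiman_const_eq_0[OF k j W]) auto
  qed
qed

section \<open>Decomposition of the joint exceedance event\<close>

definition joint_exceed :: "real \<times> real \<Rightarrow> 'a set" where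
  "joint_exceed w = {\<omega> \<in> space M. (\<Sum>i=1..n. \<Theta> i \<omega> * X i \<omega>) > fst w \<and> (\<Sum>j=1..m. \<Delta> j \<omega> * Y j \<omega>) > snd w}"

definition large_pair :: "real \<Rightarrow> nat \<times> nat \<Rightarrow> real \<times> real \<Rightarrow> 'a set" where
  "large_pair q p w = {\<omega> \<in> space M. \<Theta> (fst p) \<omega> * X (fst p) \<omega> > q * fst w \<and> \<Delta> (snd p) \<omega> * Y (snd p) \<omega> > q * snd w}"

definition extra_X_large :: "real \<Rightarrow> real \<Rightarrow> real \<Rightarrow> nat \<times> nat \<Rightarrow> nat \<Rightarrow> real \<times> real \<Rightarrow> 'a set" where
  "extra_X_large a b c p i w = {\<omega> \<in> space M. \<bar>\<Theta> i \<omega> * X i \<omega>\<bar> > a * fst w \<and>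
     \<Theta> (fst p) \<omega> * X (fst p) \<omega> > b * fst w \<and> \<Delta> (snd p) \<omega> * Y (snd p) \<omega> > c * snd w}"

definition extra_Y_large :: "real \<Rightarrow> real \<Rightarrow> real \<Rightarrow> nat \<times> nat \<Rightarrow> nat \<Rightarrow> real \<times> real \<Rightarrow> 'a set" where
  "extra_Y_large a b c p l w = {\<omega> \<in> space M. \<bar>\<Delta> l \<omega> * Y l \<omega>\<bar> > a * snd w \<and>
     \<Theta> (fst p) \<omega> * X (fst p) \<omega> > b * fst w \<and> \<Delta> (snd p) \<omega> * Y (snd p) \<omega> > c * snd w}"

lemma sets_joint_exceed: "joint_exceed w \<in> sets M"
proof -
  have "(\<lambda>\<omega>. \<Sum>i=1..n. \<Theta> i \<omega> * X i \<omega>) \<in> borel_measurable M" "(\<lambda>\<omega>. \<Sum>j=1..m. \<Delta> j \<omega> * Y j \<omega>) \<in> borel_measurable M"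
    by (intro borel_measurable_sum borel_measurable_times meas_X meas_Y meas_Th meas_De; simp)+
  then show ?thesis unfolding joint_exceed_def by measurable
qed

lemma sets_large_pair: "p \<in> pairs \<Longrightarrow> large_pair q p w \<in> sets M"
  and sets_extra_X_large: "p \<in> pairs \<Longrightarrow> i \<in> {1..n} \<Longrightarrow> extra_X_large a b c p i w \<in> sets M"
  and sets_extra_Y_large: "p \<in> pairs \<Longrightarrow> l \<in> {1..m} \<Longrightarrow> extra_Y_large a b c p l w \<in> sets M"
  unfolding large_pair_def extra_X_large_def extra_Y_large_def
  using meas_X meas_Y meas_Th meas_De by (auto simp: mem_Times_iff)

lemma extra_X_large_smallo:
  assumes p: "p \<in> pairs" and i: "i \<in> {1..n}" "i \<noteq> fst p" and "a > 0" "b > 0" "c > 0"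
  shows "(\<lambda>w. measure M (extra_X_large a b c p i w)) \<in> o[at_top \<times>\<^sub>F at_top](asymp_tail)"
proof -
  from p have k: "fst p \<in> {1..n}" and j: "snd p \<in> {1..m}" by auto
  obtain B where "0 < B" "\<And>i. i \<in> {1..n} \<Longrightarrow> AE \<omega> in M. 0 \<le> \<Theta> i \<omega> \<and> \<Theta> i \<omega> \<le> B"
    "\<And>j. j \<in> {1..m} \<Longrightarrow> AE \<omega> in M. 0 \<le> \<Delta> j \<omega> \<and> \<Delta> j \<omega> \<le> B"
    using weights_bounded by blast
  with gtai i k j show ?thesis
    unfolding extra_X_large_def GTAI_def
    by (intro extra_large_smallo[OF k j meas_Th[OF i(1)] meas_X[OF i(1)] \<open>0 < B\<close>] filterlim_fst assms) auto
qed

lemma extra_Y_large_smallo: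
  assumes p: "p \<in> pairs" and l: "l \<in> {1..m}" "l \<noteq> snd p" and "a > 0" "b > 0" "c > 0"
  shows "(\<lambda>w. measure M (extra_Y_large a b c p l w)) \<in> o[at_top \<times>\<^sub>F at_top](asymp_tail)"
proof -
  from p have k: "fst p \<in> {1..n}" and j: "snd p \<in> {1..m}" by auto
  obtain B where "0 < B" "\<And>i. i \<in> {1..n} \<Longrightarrow> AE \<omega> in M. 0 \<le> \<Theta> i \<omega> \<and> \<Theta> i \<omega> \<le> B"
    "\<And>j. j \<in> {1..m} \<Longrightarrow> AE \<omega> in M. 0 \<le> \<Delta> j \<omega> \<and> \<Delta> j \<omega> \<le> B"
    using weights_bounded by blast
  with gtai l k j show ?thesis
    unfolding extra_Y_large_def GTAI_def
    by (intro extra_large_smallo[OF k j meas_De[OF l(1)] meas_Y[OF l(1)] \<open>0 < B\<close>] filterlim_snd assms) auto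
qed

lemma joint_exceed_subset_cover:
  assumes e: "0 < e" "e < 1" and w: "fst w > 0" "snd w > 0"
  shows "joint_exceed w \<subseteq> (\<Union>p\<in>pairs. large_pair (1 - e) p w)
     \<union> (\<Union>p\<in>pairs. \<Union>i\<in>{1..n} - {fst p}. extra_X_large (e / n) (e / n) (1 / m) p i w)
     \<union> (\<Union>p\<in>pairs. \<Union>l\<in>{1..m} - {snd p}. extra_Y_large (e / m) (1 / n) (e / m) p l w)"
proof
  fix \<omega> assume "\<omega> \<in> joint_exceed w"
  then have \<omega>: "\<omega> \<in> space M" "(\<Sum>i=1..n. \<Theta> i \<omega> * X i \<omega>) > fst w" "(\<Sum>j=1..m. \<Delta> j \<omega> * Y j \<omega>) > snd w"
    by (auto simp: joint_exceed_def)
  obtain k where k: "k \<in> {1..n}" "\<Theta> k \<omega> * X k \<omega> > fst w / n"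
    using exists_gt_average[OF _ _ \<omega>(2)] nm by auto
  obtain j where j: "j \<in> {1..m}" "\<Delta> j \<omega> * Y j \<omega> > snd w / m"
    using exists_gt_average[OF _ _ \<omega>(3)] nm by auto
  have "e / n * fst w \<le> fst w / n" "e / m * snd w \<le> snd w / m"
    using e w by (simp_all add: divide_right_mono mult_left_le_one_le)
  with k j have kx: "\<Theta> k \<omega> * X k \<omega> > e / n * fst w" and jy: "\<Delta> j \<omega> * Y j \<omega> > e / m * snd w"
    by linarith+
  have kj: "(k, j) \<in> pairs" using k j by auto
  consider (X) i where "i \<in> {1..n} - {k}" "\<Theta> i \<omega> * X i \<omega> > e / n * fst w"
    | (Y) l where "l \<in> {1..m} - {j}" "\<Delta> l \<omega> * Y l \<omega> > e / m * snd w"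
    | (none) "\<forall>i\<in>{1..n} - {k}. \<Theta> i \<omega> * X i \<omega> \<le> e / n * fst w"
        "\<forall>l\<in>{1..m} - {j}. \<Delta> l \<omega> * Y l \<omega> \<le> e / m * snd w"
    by (meson not_less)
  then show "\<omega> \<in> (\<Union>p\<in>pairs. large_pair (1 - e) p w)
     \<union> (\<Union>p\<in>pairs. \<Union>i\<in>{1..n} - {fst p}. extra_X_large (e / n) (e / n) (1 / m) p i w)
     \<union> (\<Union>p\<in>pairs. \<Union>l\<in>{1..m} - {snd p}. extra_Y_large (e / m) (1 / n) (e / m) p l w)"
  proof cases
    case (X i)
    then have "\<omega> \<in> extra_X_large (e / n) (e / n) (1 / m) (k, j) i w"
      using \<omega> kx j by (auto simp: extra_X_large_def)
    with X kj show ?thesis by fastforce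
  next
    case (Y l)
    then have "\<omega> \<in> extra_Y_large (e / m) (1 / n) (e / m) (k, j) l w"
      using \<omega> jy k by (auto simp: extra_Y_large_def)
    with Y kj show ?thesis by fastforce
  next
    case none
    have "(\<Sum>i=1..n. \<Theta> i \<omega> * X i \<omega>) = \<Theta> k \<omega> * X k \<omega> + (\<Sum>i\<in>{1..n} - {k}. \<Theta> i \<omega> * X i \<omega>)"
      "(\<Sum>l=1..m. \<Delta> l \<omega> * Y l \<omega>) = \<Delta> j \<omega> * Y j \<omega> + (\<Sum>l\<in>{1..m} - {j}. \<Delta> l \<omega> * Y l \<omega>)"
      using k j by (simp_all add: sum.remove)
    moreover have "(\<Sum>i\<in>{1..n} - {k}. \<Theta> i \<omega> * X i \<omega>) \<le> e * fst w"
      by (rule sum_remove_le[OF k(1)]) (use none e w in auto)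
    moreover have "(\<Sum>l\<in>{1..m} - {j}. \<Delta> l \<omega> * Y l \<omega>) \<le> e * snd w"
      by (rule sum_remove_le[OF j(1)]) (use none e w in auto)
    ultimately have "\<omega> \<in> large_pair (1 - e) (k, j) w"
      using \<omega> by (auto simp: large_pair_def algebra_simps)
    with kj show ?thesis by blast
  qed
qed

lemma prob_joint_exceed_le:
  assumes "0 < e" "e < 1" "fst w > 0" "snd w > 0"
  shows "measure M (joint_exceed w) \<le> (\<Sum>p\<in>pairs. measure M (large_pair (1 - e) p w))
     + (\<Sum>p\<in>pairs. \<Sum>i\<in>{1..n} - {fst p}. measure M (extra_X_large (e / n) (e / n) (1 / m) p i w))
     + (\<Sum>p\<in>pairs. \<Sum>l\<in>{1..m} - {snd p}. measure M (extra_Y_large (e / m) (1 / n) (e / m) p l w))"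
proof -
  let ?U1 = "\<Union>p\<in>pairs. large_pair (1 - e) p w"
  let ?U2 = "\<Union>p\<in>pairs. \<Union>i\<in>{1..n} - {fst p}. extra_X_large (e / n) (e / n) (1 / m) p i w"
  let ?U3 = "\<Union>p\<in>pairs. \<Union>l\<in>{1..m} - {snd p}. extra_Y_large (e / m) (1 / n) (e / m) p l w"
  have sets: "?U1 \<in> sets M" "?U2 \<in> sets M" "?U3 \<in> sets M"
    by (auto intro!: sets.finite_UN sets_large_pair sets_extra_X_large sets_extra_Y_large)
  have "measure M (joint_exceed w) \<le> measure M (?U1 \<union> ?U2 \<union> ?U3)"
    using joint_exceed_subset_cover[OF assms] sets by (intro finite_measure_mono) auto
  also have "\<dots> \<le> measure M (?U1 \<union> ?U2) + measure M ?U3"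
    using sets by (intro measure_Un_le) auto
  also have "\<dots> \<le> measure M ?U1 + measure M ?U2 + measure M ?U3"
    using sets measure_Un_le by simp
  also have "measure M ?U1 \<le> (\<Sum>p\<in>pairs. measure M (large_pair (1 - e) p w))"
    by (rule measure_UNION_le) (auto intro: sets_large_pair)
  also have "measure M ?U2 \<le> (\<Sum>p\<in>pairs. \<Sum>i\<in>{1..n} - {fst p}. measure M (extra_X_large (e / n) (e / n) (1 / m) p i w))"
    by (rule measure_UN_UN_le) (auto intro: sets_extra_X_large)
  also have "measure M ?U3 \<le> (\<Sum>p\<in>pairs. \<Sum>l\<in>{1..m} - {snd p}. measure M (extra_Y_large (e / m) (1 / n) (e / m) p l w))"
    by (rule measure_UN_UN_le) (auto intro: sets_extra_Y_large)
  finally show ?thesis by simp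
qed

definition isolated_pair :: "real \<Rightarrow> nat \<times> nat \<Rightarrow> real \<times> real \<Rightarrow> 'a set" where
  "isolated_pair e p w = large_pair (1 + e) p w
     - (\<Union>i\<in>{1..n} - {fst p}. extra_X_large (e / n) (1 + e) (1 + e) p i w)
     - (\<Union>l\<in>{1..m} - {snd p}. extra_Y_large (e / m) (1 + e) (1 + e) p l w)"

lemma mem_isolated_pair:
  "\<omega> \<in> isolated_pair e p w \<longleftrightarrow> \<omega> \<in> space M
     \<and> \<Theta> (fst p) \<omega> * X (fst p) \<omega> > (1 + e) * fst w \<and> \<Delta> (snd p) \<omega> * Y (snd p) \<omega> > (1 + e) * snd w
     \<and> (\<forall>i\<in>{1..n} - {fst p}. \<bar>\<Theta> i \<omega> * X i \<omega>\<bar> \<le> e / n * fst w)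
     \<and> (\<forall>l\<in>{1..m} - {snd p}. \<bar>\<Delta> l \<omega> * Y l \<omega>\<bar> \<le> e / m * snd w)"
  unfolding isolated_pair_def large_pair_def extra_X_large_def extra_Y_large_def by (auto simp: not_less)

lemma sets_isolated_pair: "p \<in> pairs \<Longrightarrow> isolated_pair e p w \<in> sets M"
  unfolding isolated_pair_def
  by (auto intro!: sets.Diff sets.finite_UN sets_large_pair sets_extra_X_large sets_extra_Y_large)

lemma isolated_pair_subset_joint_exceed:
  assumes p: "p \<in> pairs" and "0 < e" "fst w > 0" "snd w > 0"
  shows "isolated_pair e p w \<subseteq> joint_exceed w"
proof
  fix \<omega> assume "\<omega> \<in> isolated_pair e p w"
  note \<omega> = this[unfolded mem_isolated_pair]
  from p have k: "fst p \<in> {1..n}" and j: "snd p \<in> {1..m}" by auto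
  have "(\<Sum>i\<in>{1..n} - {fst p}. \<Theta> i \<omega> * X i \<omega>) \<ge> - (e * fst w)"
    by (rule sum_remove_ge[OF k]) (use \<omega> assms in auto)
  moreover have "(\<Sum>l\<in>{1..m} - {snd p}. \<Delta> l \<omega> * Y l \<omega>) \<ge> - (e * snd w)"
    by (rule sum_remove_ge[OF j]) (use \<omega> assms in auto)
  moreover have "(\<Sum>i=1..n. \<Theta> i \<omega> * X i \<omega>) = \<Theta> (fst p) \<omega> * X (fst p) \<omega> + (\<Sum>i\<in>{1..n} - {fst p}. \<Theta> i \<omega> * X i \<omega>)"
    "(\<Sum>l=1..m. \<Delta> l \<omega> * Y l \<omega>) = \<Delta> (snd p) \<omega> * Y (snd p) \<omega> + (\<Sum>l\<in>{1..m} - {snd p}. \<Delta> l \<omega> * Y l \<omega>)"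
    using k j by (simp_all add: sum.remove)
  ultimately show "\<omega> \<in> joint_exceed w"
    using \<omega> by (auto simp: joint_exceed_def algebra_simps)
qed

lemma disjoint_family_on_isolated_pair:
  assumes "0 < e" "fst w > 0" "snd w > 0"
  shows "disjoint_family_on (\<lambda>p. isolated_pair e p w) pairs"
  unfolding disjoint_family_on_def
proof (intro ballI impI, rule ccontr)
  fix p q assume p: "p \<in> pairs" and q: "q \<in> pairs" and "p \<noteq> q"
    and "isolated_pair e p w \<inter> isolated_pair e q w \<noteq> {}"
  then obtain \<omega> where "\<omega> \<in> isolated_pair e p w" "\<omega> \<in> isolated_pair e q w" by blast
  note \<omega>p = this(1)[unfolded mem_isolated_pair] and \<omega>q = this(2)[unfolded mem_isolated_pair]
  have "e / n \<le> e" "e / m \<le> e" using assms nm by (simp_all add: divide_le_eq mult_le_cancel_left1)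
  then have lt: "e / n * fst w < (1 + e) * fst w" "e / m * snd w < (1 + e) * snd w"
    using assms by (intro mult_strict_right_mono; simp)+
  show False
  proof (cases "fst p = fst q")
    case False
    with p q have "\<bar>\<Theta> (fst q) \<omega> * X (fst q) \<omega>\<bar> \<le> e / n * fst w" using \<omega>p by auto
    with \<omega>q lt(1) show False by linarith
  next
    case True
    with \<open>p \<noteq> q\<close> p q have "\<bar>\<Delta> (snd q) \<omega> * Y (snd q) \<omega>\<bar> \<le> e / m * snd w"
      using \<omega>p by (auto simp: prod_eq_iff)
    with \<omega>q lt(2) show False by linarith
  qed
qed

lemma prob_joint_exceed_ge:
  assumes "0 < e" "fst w > 0" "snd w > 0"
  shows "(\<Sum>p\<in>pairs. measure M (large_pair (1 + e) p w))
     - (\<Sum>p\<in>pairs. \<Sum>i\<in>{1..n} - {fst p}. measure M (extra_X_large (e / n) (1 + e) (1 + e) p i w))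
     - (\<Sum>p\<in>pairs. \<Sum>l\<in>{1..m} - {snd p}. measure M (extra_Y_large (e / m) (1 + e) (1 + e) p l w))
     \<le> measure M (joint_exceed w)"
proof -
  have "measure M (large_pair (1 + e) p w) \<le> measure M (isolated_pair e p w)
      + (\<Sum>i\<in>{1..n} - {fst p}. measure M (extra_X_large (e / n) (1 + e) (1 + e) p i w))
      + (\<Sum>l\<in>{1..m} - {snd p}. measure M (extra_Y_large (e / m) (1 + e) (1 + e) p l w))" if p: "p \<in> pairs" for p
  proof -
    let ?V2 = "\<Union>i\<in>{1..n} - {fst p}. extra_X_large (e / n) (1 + e) (1 + e) p i w"
    let ?V3 = "\<Union>l\<in>{1..m} - {snd p}. extra_Y_large (e / m) (1 + e) (1 + e) p l w"
    have sets: "isolated_pair e p w \<in> sets M" "?V2 \<in> sets M" "?V3 \<in> sets M"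
      using p by (auto intro!: sets.finite_UN sets_isolated_pair sets_extra_X_large sets_extra_Y_large)
    have "measure M (large_pair (1 + e) p w) \<le> measure M (isolated_pair e p w \<union> ?V2 \<union> ?V3)"
      using sets by (intro finite_measure_mono) (auto simp: isolated_pair_def)
    also have "\<dots> \<le> measure M (isolated_pair e p w \<union> ?V2) + measure M ?V3"
      using sets by (intro measure_Un_le) auto
    also have "\<dots> \<le> measure M (isolated_pair e p w) + measure M ?V2 + measure M ?V3"
      using sets measure_Un_le by simp
    also have "measure M ?V2 \<le> (\<Sum>i\<in>{1..n} - {fst p}. measure M (extra_X_large (e / n) (1 + e) (1 + e) p i w))"
      using p by (intro measure_UNION_le) (auto intro: sets_extra_X_large)
    also have "measure M ?V3 \<le> (\<Sum>l\<in>{1..m} - {snd p}. measure M (extra_Y_large (e / m) (1 + e) (1 + e) p l w))"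
      using p by (intro measure_UNION_le) (auto intro: sets_extra_Y_large)
    finally show ?thesis by simp
  qed
  then have "(\<Sum>p\<in>pairs. measure M (large_pair (1 + e) p w)) \<le> (\<Sum>p\<in>pairs. measure M (isolated_pair e p w))
      + (\<Sum>p\<in>pairs. \<Sum>i\<in>{1..n} - {fst p}. measure M (extra_X_large (e / n) (1 + e) (1 + e) p i w))
      + (\<Sum>p\<in>pairs. \<Sum>l\<in>{1..m} - {snd p}. measure M (extra_Y_large (e / m) (1 + e) (1 + e) p l w))"
    by (simp add: sum.distrib[symmetric] sum_mono)
  moreover have "(\<Sum>p\<in>pairs. measure M (isolated_pair e p w)) = measure M (\<Union>p\<in>pairs. isolated_pair e p w)"
    using disjoint_family_on_isolated_pair[OF assms]
    by (intro finite_measure_finite_Union[symmetric]) (auto intro: sets_isolated_pair)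
  moreover have "\<dots> \<le> measure M (joint_exceed w)"
    using isolated_pair_subset_joint_exceed[OF _ assms] sets_joint_exceed by (intro finite_measure_mono) auto
  ultimately show ?thesis by linarith
qed

definition alpha_total :: real where
  "alpha_total = (\<Sum>i=1..n. \<alpha> i) + (\<Sum>j=1..m. \<alpha>' j)"

lemma alpha_le_alpha_total:
  assumes "p \<in> pairs"
  shows "\<alpha> (fst p) + \<alpha>' (snd p) \<le> alpha_total"
  using member_le_sum[of "fst p" "{1..n}" \<alpha>] member_le_sum[of "snd p" "{1..m}" \<alpha>'] assms alpha alpha'
  unfolding alpha_total_def by (auto simp: mem_Times_iff)

definition main_term :: "real \<Rightarrow> nat \<times> nat \<Rightarrow> real \<times> real \<Rightarrow> real" where
  "main_term q p w = breiman_const (fst p) (snd p) * q powr - \<alpha> (fst p) * q powr - \<alpha>' (snd p)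
     * tail M (X (fst p)) (fst w) * tail M (Y (snd p)) (snd w)"

lemma main_term_scale:
  "main_term q p w = q powr - (\<alpha> (fst p) + \<alpha>' (snd p))
     * (breiman_const (fst p) (snd p) * tail M (X (fst p)) (fst w) * tail M (Y (snd p)) (snd w))"
  unfolding main_term_def by (simp add: powr_add[symmetric] algebra_simps)

lemma sum_main_term_le:
  assumes "0 < q" "q \<le> 1"
  shows "(\<Sum>p\<in>pairs. main_term q p w) \<le> q powr - alpha_total * asymp_tail w"
proof -
  have "q powr - (\<alpha> (fst p) + \<alpha>' (snd p)) \<le> q powr - alpha_total" if "p \<in> pairs" for p
    using alpha_le_alpha_total[OF that] assms by (intro powr_mono') auto
  then show ?thesis
    unfolding asymp_tail_def sum_distrib_left main_term_scale
    by (intro sum_mono mult_right_mono) (auto intro!: mult_nonneg_nonneg breiman_const_nonneg)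
qed

lemma sum_main_term_ge:
  assumes "1 \<le> q"
  shows "q powr - alpha_total * asymp_tail w \<le> (\<Sum>p\<in>pairs. main_term q p w)"
proof -
  have "q powr - alpha_total \<le> q powr - (\<alpha> (fst p) + \<alpha>' (snd p))" if "p \<in> pairs" for p
    using alpha_le_alpha_total[OF that] assms by (intro powr_mono) auto
  then show ?thesis
    unfolding asymp_tail_def sum_distrib_left main_term_scale
    by (intro sum_mono mult_right_mono) (auto intro!: mult_nonneg_nonneg breiman_const_nonneg)
qed

lemma large_pair_error_smallo:
  assumes "p \<in> pairs" "q > 0"
  shows "(\<lambda>w. measure M (large_pair q p w) - main_term q p w) \<in> o[at_top \<times>\<^sub>F at_top](asymp_tail)"
  using weighted_pair_error_smallo[of "fst p" "snd p" q] assms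
  by (simp add: large_pair_def main_term_def mem_Times_iff)

lemma joint_exceed_upper_bound:
  assumes e: "0 < e" "e < 1"
  shows "\<exists>up. up \<in> o[at_top \<times>\<^sub>F at_top](asymp_tail) \<and>
    (\<forall>\<^sub>F w in at_top \<times>\<^sub>F at_top. measure M (joint_exceed w) \<le> (1 - e) powr - alpha_total * asymp_tail w + up w)"
proof (intro exI conjI)
  define up where "up w = (\<Sum>p\<in>pairs. measure M (large_pair (1 - e) p w) - main_term (1 - e) p w)
     + (\<Sum>p\<in>pairs. \<Sum>i\<in>{1..n} - {fst p}. measure M (extra_X_large (e / n) (e / n) (1 / m) p i w))
     + (\<Sum>p\<in>pairs. \<Sum>l\<in>{1..m} - {snd p}. measure M (extra_Y_large (e / m) (1 / n) (e / m) p l w))" for w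
  show "up \<in> o[at_top \<times>\<^sub>F at_top](asymp_tail)"
    unfolding up_def[abs_def] using e nm
    by (intro sum_in_smallo(1) big_sum_in_smallo large_pair_error_smallo
        extra_X_large_smallo extra_Y_large_smallo) auto
  show "\<forall>\<^sub>F w in at_top \<times>\<^sub>F at_top. measure M (joint_exceed w) \<le> (1 - e) powr - alpha_total * asymp_tail w + up w"
    using eventually_at_top_prod_pos
  proof eventually_elim
    case (elim w)
    then have "0 < fst w" "0 < snd w" by auto
    with prob_joint_exceed_le[OF e this] sum_main_term_le[of "1 - e" w] e show ?case
      by (simp add: up_def sum_subtractf)
  qed
qed

lemma joint_exceed_lower_bound:
  assumes e: "0 < e"
  shows "\<exists>lo. lo \<in> o[at_top \<times>\<^sub>F at_top](asymp_tail) \<and>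
    (\<forall>\<^sub>F w in at_top \<times>\<^sub>F at_top. (1 + e) powr - alpha_total * asymp_tail w + lo w \<le> measure M (joint_exceed w))"
proof (intro exI conjI)
  define lo where "lo w = (\<Sum>p\<in>pairs. measure M (large_pair (1 + e) p w) - main_term (1 + e) p w)
     - (\<Sum>p\<in>pairs. \<Sum>i\<in>{1..n} - {fst p}. measure M (extra_X_large (e / n) (1 + e) (1 + e) p i w))
     - (\<Sum>p\<in>pairs. \<Sum>l\<in>{1..m} - {snd p}. measure M (extra_Y_large (e / m) (1 + e) (1 + e) p l w))" for w
  show "lo \<in> o[at_top \<times>\<^sub>F at_top](asymp_tail)"
    unfolding lo_def[abs_def] using e nm
    by (intro sum_in_smallo(2) big_sum_in_smallo large_pair_error_smallo
        extra_X_large_smallo extra_Y_large_smallo) auto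
  show "\<forall>\<^sub>F w in at_top \<times>\<^sub>F at_top. (1 + e) powr - alpha_total * asymp_tail w + lo w \<le> measure M (joint_exceed w)"
    using eventually_at_top_prod_pos
  proof eventually_elim
    case (elim w)
    then have "0 < fst w" "0 < snd w" by auto
    with prob_joint_exceed_ge[OF e this] sum_main_term_ge[of "1 + e" w] e show ?case
      by (simp add: lo_def sum_subtractf)
  qed
qed

lemma joint_exceed_asymp_equiv:
  "(\<lambda>w. measure M (joint_exceed w)) \<sim>[at_top \<times>\<^sub>F at_top] asymp_tail"
  using asymp_tail_nonneg joint_exceed_upper_bound joint_exceed_lower_bound
  by (rule asymp_equiv_sandwich)

lemma asymp_tail_eq:
  "asymp_tail w = (\<Sum>i=1..n. \<Sum>j\<in>{1..m} - {i}. (\<integral>\<omega>. \<Theta> i \<omega> powr \<alpha> i * \<Delta> j \<omega> powr \<alpha>' j \<partial>M)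
                       * tail M (X i) (fst w) * tail M (Y j) (snd w))
    + (\<Sum>i=1..min n m. C i * (\<integral>\<omega>. \<Theta> i \<omega> powr \<alpha> i * \<Delta> i \<omega> powr \<alpha>' i \<partial>M)
                       * tail M (X i) (fst w) * tail M (Y i) (snd w))"
proof -
  define T where "T i j = breiman_const i j * tail M (X i) (fst w) * tail M (Y j) (snd w)" for i j
  have off_diag: "T i j = (\<integral>\<omega>. \<Theta> i \<omega> powr \<alpha> i * \<Delta> j \<omega> powr \<alpha>' j \<partial>M) * tail M (X i) (fst w) * tail M (Y j) (snd w)"
    if "j \<noteq> i" for i j
    using that by (simp add: T_def breiman_const_def pair_const_def)
  have "asymp_tail w = (\<Sum>i=1..n. \<Sum>j=1..m. T i j)"
    unfolding asymp_tail_def T_def by (simp add: sum.cartesian_product split_def)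
  also have "\<dots> = (\<Sum>i=1..n. (\<Sum>j\<in>{1..m} - {i}. T i j) + (if i \<le> m then T i i else 0))"
    by (intro sum.cong refl) (auto simp: sum.remove)
  also have "\<dots> = (\<Sum>i=1..n. \<Sum>j\<in>{1..m} - {i}. T i j) + (\<Sum>i=1..n. if i \<le> m then T i i else 0)"
    by (simp add: sum.distrib)
  also have "(\<Sum>i=1..n. if i \<le> m then T i i else 0) = (\<Sum>i\<in>{i\<in>{1..n}. i \<le> m}. T i i)"
    by (rule sum.inter_filter[symmetric]) simp
  also have "{i\<in>{1..n}. i \<le> m} = {1..min n m}" by auto
  finally show ?thesis
    by (simp add: off_diag T_def breiman_const_def pair_const_def mult.assoc)
qed

end

theorem corollary2p1:
  fixes M :: "'a measure" and n m :: nat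
    and X Y \<Theta> \<Delta> :: "nat \<Rightarrow> 'a \<Rightarrow> real"
    and C \<alpha> \<alpha>' :: "nat \<Rightarrow> real"
  assumes P: "prob_space M"
    and nm: "n \<ge> 1" "m \<ge> 1"
    and meas_X: "\<And>i. i \<in> {1..n} \<Longrightarrow> X i \<in> borel_measurable M"
    and meas_Y: "\<And>j. j \<in> {1..m} \<Longrightarrow> Y j \<in> borel_measurable M"
    and meas_Th: "\<And>i. i \<in> {1..n} \<Longrightarrow> \<Theta> i \<in> borel_measurable M"
    and meas_De: "\<And>j. j \<in> {1..m} \<Longrightarrow> \<Delta> j \<in> borel_measurable M"
    and gtai: "GTAI M n m X Y"
    and Th_nonneg: "\<And>i. i \<in> {1..n} \<Longrightarrow> AE \<omega> in M. \<Theta> i \<omega> \<ge> 0"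
    and De_nonneg: "\<And>j. j \<in> {1..m} \<Longrightarrow> AE \<omega> in M. \<Delta> j \<omega> \<ge> 0"
    and Th_nondeg: "\<And>i. i \<in> {1..n} \<Longrightarrow> measure M {\<omega> \<in> space M. \<Theta> i \<omega> = 0} < 1"
    and De_nondeg: "\<And>j. j \<in> {1..m} \<Longrightarrow> measure M {\<omega> \<in> space M. \<Delta> j \<omega> = 0} < 1"
    and Th_bdd: "\<And>i. i \<in> {1..n} \<Longrightarrow> \<exists>b. AE \<omega> in M. \<Theta> i \<omega> \<le> b"
    and De_bdd: "\<And>j. j \<in> {1..m} \<Longrightarrow> \<exists>b. AE \<omega> in M. \<Delta> j \<omega> \<le> b"
    and indep: "prob_space.indep_var M
                  (PiM (idx n m) (\<lambda>_. borel)) (joint_vec n m \<Theta> \<Delta>)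
                  (PiM (idx n m) (\<lambda>_. borel)) (joint_vec n m X Y)"
    and sai: "\<And>i. i \<in> {1..min n m} \<Longrightarrow> SAI M (X i) (Y i) (C i)"
    and indep_XY: "\<And>i j. i \<in> {1..n} \<Longrightarrow> j \<in> {1..m} \<Longrightarrow> i \<noteq> j \<Longrightarrow>
                     prob_space.indep_var M borel (X i) borel (Y j)"
    and alpha: "\<And>i. i \<in> {1..n} \<Longrightarrow> \<alpha> i \<ge> 0"
    and alpha': "\<And>j. j \<in> {1..m} \<Longrightarrow> \<alpha>' j \<ge> 0"
    and rv_F: "\<And>i. i \<in> {1..n} \<Longrightarrow> regvar_tail (tail M (X i)) (\<alpha> i)"
    and rv_G: "\<And>j. j \<in> {1..m} \<Longrightarrow> regvar_tail (tail M (Y j)) (\<alpha>' j)"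
  shows "(\<lambda>(x, y). measure M {\<omega> \<in> space M.
              (\<Sum>i=1..n. \<Theta> i \<omega> * X i \<omega>) > x \<and> (\<Sum>j=1..m. \<Delta> j \<omega> * Y j \<omega>) > y})
         \<sim>[at_top \<times>\<^sub>F at_top]
         (\<lambda>(x, y). (\<Sum>i=1..n. \<Sum>j\<in>{1..m} - {i}.
                       (\<integral>\<omega>. \<Theta> i \<omega> powr \<alpha> i * \<Delta> j \<omega> powr \<alpha>' j \<partial>M)
                       * tail M (X i) x * tail M (Y j) y)
                 + (\<Sum>i=1..min n m. C i * (\<integral>\<omega>. \<Theta> i \<omega> powr \<alpha> i * \<Delta> i \<omega> powr \<alpha>' i \<partial>M)
                       * tail M (X i) x * tail M (Y i) y))"
proof -
  interpret GTAI_weighted_sums M n m X Y \<Theta> \<Delta> C \<alpha> \<alpha>'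
    by (rule GTAI_weighted_sums.intro) (fact assms)+
  have "(\<lambda>(x, y). measure M {\<omega> \<in> space M.
              (\<Sum>i=1..n. \<Theta> i \<omega> * X i \<omega>) > x \<and> (\<Sum>j=1..m. \<Delta> j \<omega> * Y j \<omega>) > y})
      = (\<lambda>w. measure M (joint_exceed w))"
    by (auto simp: joint_exceed_def fun_eq_iff)
  moreover have "(\<lambda>(x, y). (\<Sum>i=1..n. \<Sum>j\<in>{1..m} - {i}.
                       (\<integral>\<omega>. \<Theta> i \<omega> powr \<alpha> i * \<Delta> j \<omega> powr \<alpha>' j \<partial>M)
                       * tail M (X i) x * tail M (Y j) y)
                 + (\<Sum>i=1..min n m. C i * (\<integral>\<omega>. \<Theta> i \<omega> powr \<alpha> i * \<Delta> i \<omega> powr \<alpha>' i \<partial>M)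
                       * tail M (X i) x * tail M (Y i) y)) = asymp_tail"
    by (auto simp: asymp_tail_eq fun_eq_iff)
  ultimately show ?thesis
    using joint_exceed_asymp_equiv by simp
qed

end
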